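(* Let $G$ be a finite group, $\hat G$ its set of irreducible unitary representations (up to equivalence), and let $\rho_A:G\to U(\mathcal{H}_A)$, $\rho_B:G\to U(\mathcal{H}_B)$ be unitary representations on finite-dimensional complex Hilbert spaces. Let $\rho(g):=\rho_A(g)\otimes\rho_B(g)$ on $\mathcal{H}_A\otimes\mathcal{H}_B$. For $\lambda\in\hat G$ let $\mathcal{H}_A^\lambda\cong V_\lambda\otimes\mathbb{C}^{m_\lambda}$ and $\mathcal{H}_B^\lambda\cong V_\lambda\otimes\mathbb{C}^{n_\lambda}$ be the $\lambda$-isotypic components, so $\mathcal{H}_A=\bigoplus_\lambda\mathcal{H}_A^\lambda$, $\mathcal{H}_B=\bigoplus_\lambda\mathcal{H}_B^\lambda$, and define $\mathcal{K}_G:=\bigoplus_{\lambda\in\hat G}\mathcal{H}_A^\lambda\otimes\mathcal{H}_B^\lambda$. Let $T_A\in\operatorname{End}_G(\mathcal{H}_A)$ and $T_B\in\operatorname{End}_G(\mathcal{H}_B)$ be self-adjoint and $K:=T_A\otimes I-I\otimes T_B$. Then: (i) $K$ commutes with $\rho(g)$ for all $g\in G$; (ii) if there are scalars $a_\lambda$ ($\lambda\in\hat G$) such that $T_A$ acts as $a_\lambda I$ on $\mathcal{H}_A^\lambda$ and $T_B$ acts as $a_\lambda I$ on $\mathcal{H}_B^\lambda$ for all $\lambda$, then $\mathcal{K}_G\subseteq\ker(K)$; (iii) if moreover $T_A=\rho_A(z)$ and $T_B=\rho_B(z)$ for a central element $z\in Z(\mathbb{C}[G])$ (extending $\rho_A,\rho_B$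 linearly), acting by the scalar $\alpha_\lambda$ on $V_\lambda$, and the map $\lambda\mapsto\alpha_\lambda$ is injective on $\hat G$, then $\ker(K)=\mathcal{K}_G$.
   Context: $\operatorname{End}_G(\mathcal{H}_A)$ denotes the operators on $\mathcal{H}_A$ commuting with $\rho_A(g)$ for all $g\in G$ (similarly for $B$). $Z(\mathbb{C}[G])$ is the center of the group algebra. $\mathcal{K}_G$ is called the diagonal isotypic subspace, and $\ker(K)$ the synchronization subspace. *)

theory Defs
  imports "HOL-Algebra.Group" "Jordan_Normal_Form.Matrix"
begin

text \<open>Finite-dimensional complex Hilbert spaces are modelled as coordinate spaces
  carrier_vec d of complex vectors (standard inner product); operators as complex matrices.\<close>

definition adj :: "complex mat \<Rightarrow> complex mat" where
  "adj A = mat (dim_col A) (dim_row A) (\<lambda>(i,j). cnj (A $$ (j,i)))"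

definition unitary_mat :: "nat \<Rightarrow> complex mat \<Rightarrow> bool" where
  "unitary_mat d U \<longleftrightarrow> U \<in> carrier_mat d d \<and> U * adj U = 1\<^sub>m d \<and> adj U * U = 1\<^sub>m d"

definition self_adjoint :: "complex mat \<Rightarrow> bool" where
  "self_adjoint T \<longleftrightarrow> adj T = T"

definition unitary_rep :: "('g, 'b) monoid_scheme \<Rightarrow> nat \<Rightarrow> ('g \<Rightarrow> complex mat) \<Rightarrow> bool" where
  "unitary_rep G d \<rho> \<longleftrightarrow>
     (\<forall>g\<in>carrier G. unitary_mat d (\<rho> g)) \<and>
     (\<forall>g\<in>carrier G. \<forall>h\<in>carrier G. \<rho> (g \<otimes>\<^bsub>G\<^esub> h) = \<rho> g * \<rho> h)"

definition is_subspace :: "nat \<Rightarrow> complex vec set \<Rightarrow> bool" where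
  "is_subspace d W \<longleftrightarrow> W \<subseteq> carrier_vec d \<and> 0\<^sub>v d \<in> W \<and>
     (\<forall>u\<in>W. \<forall>v\<in>W. u + v \<in> W) \<and> (\<forall>c. \<forall>u\<in>W. c \<cdot>\<^sub>v u \<in> W)"

definition span_in :: "nat \<Rightarrow> complex vec set \<Rightarrow> complex vec set" where
  "span_in d S = \<Inter>{W. is_subspace d W \<and> S \<subseteq> W}"

definition irreducible_rep :: "('g, 'b) monoid_scheme \<Rightarrow> nat \<Rightarrow> ('g \<Rightarrow> complex mat) \<Rightarrow> bool" where
  "irreducible_rep G d \<sigma> \<longleftrightarrow> unitary_rep G d \<sigma> \<and> d > 0 \<and>
     (\<forall>W. is_subspace d W \<and> (\<forall>g\<in>carrier G. \<forall>v\<in>W. \<sigma> g *\<^sub>v v \<in> W)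
          \<longrightarrow> W = {0\<^sub>v d} \<or> W = carrier_vec d)"

text \<open>Elements of \<open>\<hat>G\<close> are represented by irreducible unitary representations (dimension, map);
  equivalence of representations:\<close>
definition equiv_rep :: "('g, 'b) monoid_scheme \<Rightarrow> nat \<times> ('g \<Rightarrow> complex mat)
     \<Rightarrow> nat \<times> ('g \<Rightarrow> complex mat) \<Rightarrow> bool" where
  "equiv_rep G lam mu \<longleftrightarrow> fst lam = fst mu \<and>
     (\<exists>P Q. P \<in> carrier_mat (fst lam) (fst lam) \<and> Q \<in> carrier_mat (fst lam) (fst lam) \<and>
        P * Q = 1\<^sub>m (fst lam) \<and> Q * P = 1\<^sub>m (fst lam) \<and>
        (\<forall>g\<in>carrier G. P * snd lam g = snd mu g * P))"

definition irreps :: "('g, 'b) monoid_scheme \<Rightarrow> (nat \<times> ('g \<Rightarrow> complex mat)) set" where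
  "irreps G = {(d, \<sigma>). irreducible_rep G d \<sigma>}"

definition isotypic :: "('g, 'b) monoid_scheme \<Rightarrow> nat \<Rightarrow> ('g \<Rightarrow> complex mat)
     \<Rightarrow> nat \<times> ('g \<Rightarrow> complex mat) \<Rightarrow> complex vec set" where
  "isotypic G m \<rho> lam = span_in m
     {\<Phi> *\<^sub>v v | \<Phi> v. \<Phi> \<in> carrier_mat m (fst lam) \<and> v \<in> carrier_vec (fst lam) \<and>
         (\<forall>g\<in>carrier G. \<rho> g * \<Phi> = \<Phi> * snd lam g)}"

text \<open>Kronecker (tensor) products; C^m \<otimes> C^n = C^(m*n), index (i,k) \<mapsto> i*n+k.\<close>
definition kron :: "complex mat \<Rightarrow> complex mat \<Rightarrow> complex mat" where
  "kron A B = mat (dim_row A * dim_row B) (dim_col A * dim_col B)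
     (\<lambda>(i,j). A $$ (i div dim_row B, j div dim_col B) * B $$ (i mod dim_row B, j mod dim_col B))"

definition kron_vec :: "complex vec \<Rightarrow> complex vec \<Rightarrow> complex vec" where
  "kron_vec u v = vec (dim_vec u * dim_vec v) (\<lambda>i. u $ (i div dim_vec v) * v $ (i mod dim_vec v))"

definition tensor_sub :: "nat \<Rightarrow> nat \<Rightarrow> complex vec set \<Rightarrow> complex vec set \<Rightarrow> complex vec set" where
  "tensor_sub m n S T = span_in (m * n) {kron_vec u v | u v. u \<in> S \<and> v \<in> T}"

definition diag_isotypic :: "('g, 'b) monoid_scheme \<Rightarrow> nat \<Rightarrow> ('g \<Rightarrow> complex mat)
     \<Rightarrow> nat \<Rightarrow> ('g \<Rightarrow> complex mat) \<Rightarrow> complex vec set" where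
  "diag_isotypic G m \<rho>A n \<rho>B =
     span_in (m * n) (\<Union>lam\<in>irreps G. tensor_sub m n (isotypic G m \<rho>A lam) (isotypic G n \<rho>B lam))"

definition ker_mat :: "nat \<Rightarrow> complex mat \<Rightarrow> complex vec set" where
  "ker_mat d K = {v \<in> carrier_vec d. K *\<^sub>v v = 0\<^sub>v d}"

definition End_G :: "('g, 'b) monoid_scheme \<Rightarrow> nat \<Rightarrow> ('g \<Rightarrow> complex mat) \<Rightarrow> complex mat set" where
  "End_G G d \<rho> = {T \<in> carrier_mat d d. \<forall>g\<in>carrier G. T * \<rho> g = \<rho> g * T}"

text \<open>Group algebra C[G] as functions carrier G \<rightarrow> C with convolution; its centre.\<close>
definition conv :: "('g, 'b) monoid_scheme \<Rightarrow> ('g \<Rightarrow> complex) \<Rightarrow> ('g \<Rightarrow> complex) \<Rightarrow> 'g \<Rightarrow> complex" where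
  "conv G x y g = (\<Sum>h\<in>carrier G. x h * y (inv\<^bsub>G\<^esub> h \<otimes>\<^bsub>G\<^esub> g))"

definition group_alg_center :: "('g, 'b) monoid_scheme \<Rightarrow> ('g \<Rightarrow> complex) set" where
  "group_alg_center G = {z. \<forall>x. \<forall>g\<in>carrier G. conv G z x g = conv G x z g}"

definition rep_alg :: "('g, 'b) monoid_scheme \<Rightarrow> nat \<Rightarrow> ('g \<Rightarrow> complex mat) \<Rightarrow> ('g \<Rightarrow> complex) \<Rightarrow> complex mat" where
  "rep_alg G d \<rho> z = mat d d (\<lambda>(i,j). \<Sum>g\<in>carrier G. z g * \<rho> g $$ (i,j))"

end

(* If T_A u = a u and T_B v = b v, then K (u \<otimes> v) = (a - b) (u \<otimes> v). Commutation of K with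
   \<rho>_A(g) \<otimes> \<rho>_B(g) is the mixed-product rule for Kronecker products, and K_G \<subseteq> ker K because K
   kills u \<otimes> v whenever u and v lie in \<lambda>-components on which T_A and T_B act by the same scalar.

   For the converse, unitarity gives complete reducibility: the orthogonal complement of the sum of
   the isotypic components is invariant, and a nonzero invariant subspace contains an irreducible
   one, namely an invariant subspace of least positive dimension. Hence C^m \<otimes> C^n is spanned by
   vectors u \<otimes> v with u \<in> H_A^\<lambda>, v \<in> H_B^\<mu>, eigenvectors of K for the eigenvalue \<alpha>_\<lambda> - \<alpha>_\<mu>.
   If K x = 0, the polynomial \<Prod>(I - K/c) over the nonzero eigenvalues c fixes x and kills all
   these eigenvectors with c \<noteq> 0, so x is a combination of those with \<alpha>_\<lambda> = \<alpha>_\<mu>; by injectivity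
   of \<alpha> then \<lambda> \<cong> \<mu>, and such u \<otimes> v lie in K_G. *)

theory Submission
  imports Defs "Jordan_Normal_Form.Determinant"
begin

lemma eq_if_minus_vec_eq_0:
  fixes x y :: "complex vec"
  assumes "x \<in> carrier_vec d" "y \<in> carrier_vec d" "x - y = 0\<^sub>v d"
  shows "x = y"
proof (rule eq_vecI)
  fix i assume "i < dim_vec y"
  then have "x $ i - y $ i = (x - y) $ i" using assms(2) by simp
  also have "\<dots> = 0" using assms(3) \<open>i < dim_vec y\<close> assms(2) by simp
  finally show "x $ i = y $ i" by simp
qed (use assms in auto)

lemma zero_smult_vec[simp]: "v \<in> carrier_vec n \<Longrightarrow> 0 \<cdot>\<^sub>v v = (0\<^sub>v n :: complex vec)"
  by (intro eq_vecI) auto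

lemma mult_mat_zero_vec: "A \<in> carrier_mat n d \<Longrightarrow> A *\<^sub>v 0\<^sub>v d = 0\<^sub>v n"
  by (intro eq_vecI) (auto simp: scalar_prod_def)

lemma smult_one_mat_mult_vec:
  fixes v :: "complex vec"
  assumes "v \<in> carrier_vec d"
  shows "(c \<cdot>\<^sub>m 1\<^sub>m d) *\<^sub>v v = c \<cdot>\<^sub>v v"
proof -
  have e: "\<And>l i. c * (if l = i then 1 else 0) * v $ l = (if l = i then c * v $ l else 0)" by simp
  show ?thesis using assms by (intro eq_vecI) (auto simp: scalar_prod_def unit_vec_def e)
qed

lemma mat_mult_unit_vec_index:
  fixes A :: "complex mat"
  assumes "A \<in> carrier_mat n k" "j < k" "i < n"
  shows "(A *\<^sub>v unit_vec k j) $ i = A $$ (i,j)"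
proof -
  have "\<And>l. A $$ (i, l) * (if l = j then 1 else 0) = (if l = j then A $$ (i,l) else 0)" by simp
  then have "(A *\<^sub>v unit_vec k j) $ i = (\<Sum>l\<in>{0..<k}. if l = j then A $$ (i,l) else 0)"
    using assms by (auto simp: scalar_prod_def unit_vec_def row_def)
  then show ?thesis using assms by simp
qed

lemma mat_eq_by_mult_vec:
  fixes A B :: "complex mat"
  assumes A: "A \<in> carrier_mat n k" and B: "B \<in> carrier_mat n k"
    and eq: "\<And>y. y \<in> carrier_vec k \<Longrightarrow> A *\<^sub>v y = B *\<^sub>v y"
  shows "A = B"
proof (rule eq_matI)
  fix i j assume "i < dim_row B" "j < dim_col B"
  then have i: "i < n" and j: "j < k" using B by auto
  show "A $$ (i,j) = B $$ (i,j)"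
    using mat_mult_unit_vec_index[OF A j i] mat_mult_unit_vec_index[OF B j i] eq[of "unit_vec k j"] by simp
qed (use A B in auto)

lemma subspace_zero: "is_subspace d W \<Longrightarrow> 0\<^sub>v d \<in> W"
  unfolding is_subspace_def by auto

lemma subspace_add: "is_subspace d W \<Longrightarrow> u \<in> W \<Longrightarrow> v \<in> W \<Longrightarrow> u + v \<in> W"
  unfolding is_subspace_def by auto

lemma subspace_smult: "is_subspace d W \<Longrightarrow> u \<in> W \<Longrightarrow> c \<cdot>\<^sub>v u \<in> W"
  unfolding is_subspace_def by auto

lemma subspace_carrier: "is_subspace d W \<Longrightarrow> u \<in> W \<Longrightarrow> u \<in> carrier_vec d"
  unfolding is_subspace_def by auto

lemma subspace_minus:
  assumes "is_subspace d W" "u \<in> W" "v \<in> W"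
  shows "u - v \<in> W"
proof -
  have "u - v = u + (-1) \<cdot>\<^sub>v v"
    using subspace_carrier[OF assms(1,2)] subspace_carrier[OF assms(1,3)] by auto
  then show ?thesis using assms subspace_add subspace_smult by metis
qed

lemma is_subspace_carrier_vec: "is_subspace d (carrier_vec d)"
  unfolding is_subspace_def by auto

lemma is_subspace_zero_vec: "is_subspace d {0\<^sub>v d}"
  unfolding is_subspace_def by auto

lemma is_subspace_linear_preimage:
  assumes T: "is_subspace d' T"
    and add: "\<And>x y. x \<in> carrier_vec d \<Longrightarrow> y \<in> carrier_vec d \<Longrightarrow> f (x + y) = f x + f y"
    and smult: "\<And>c x. x \<in> carrier_vec d \<Longrightarrow> f (c \<cdot>\<^sub>v x) = c \<cdot>\<^sub>v f x"
    and zero: "f (0\<^sub>v d) = 0\<^sub>v d'"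
  shows "is_subspace d {x \<in> carrier_vec d. f x \<in> T}"
  unfolding is_subspace_def
  using subspace_zero[OF T] subspace_add[OF T] subspace_smult[OF T] add smult zero by auto

lemma is_subspace_mat_preimage:
  assumes "A \<in> carrier_mat n d" "is_subspace n W"
  shows "is_subspace d {x \<in> carrier_vec d. A *\<^sub>v x \<in> W}"
  by (rule is_subspace_linear_preimage[OF assms(2)])
    (use assms(1) in \<open>auto simp: mult_add_distrib_mat_vec mult_mat_vec mult_mat_zero_vec\<close>)

lemma is_subspace_ker_mat: "K \<in> carrier_mat d d \<Longrightarrow> is_subspace d (ker_mat d K)"
  unfolding ker_mat_def using is_subspace_mat_preimage[OF _ is_subspace_zero_vec, of K d d] by simp

lemma is_subspace_eigenspace:
  assumes A: "A \<in> carrier_mat d d"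
  shows "is_subspace d {x \<in> carrier_vec d. A *\<^sub>v x = c \<cdot>\<^sub>v x}"
  unfolding is_subspace_def
proof (intro conjI ballI allI)
  show "0\<^sub>v d \<in> {x \<in> carrier_vec d. A *\<^sub>v x = c \<cdot>\<^sub>v x}" using A by (auto simp: mult_mat_zero_vec)
  fix u v assume u: "u \<in> {x \<in> carrier_vec d. A *\<^sub>v x = c \<cdot>\<^sub>v x}" and v: "v \<in> {x \<in> carrier_vec d. A *\<^sub>v x = c \<cdot>\<^sub>v x}"
  have "A *\<^sub>v (u + v) = c \<cdot>\<^sub>v u + c \<cdot>\<^sub>v v" using u v A by (simp add: mult_add_distrib_mat_vec)
  also have "\<dots> = c \<cdot>\<^sub>v (u + v)" using u v by (intro smult_add_distrib_vec[symmetric]) auto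
  finally show "u + v \<in> {x \<in> carrier_vec d. A *\<^sub>v x = c \<cdot>\<^sub>v x}" using u v by auto
next
  fix a u assume u: "u \<in> {x \<in> carrier_vec d. A *\<^sub>v x = c \<cdot>\<^sub>v x}"
  have "A *\<^sub>v (a \<cdot>\<^sub>v u) = c \<cdot>\<^sub>v (a \<cdot>\<^sub>v u)" using u A by (auto simp: mult_mat_vec smult_smult_assoc mult.commute)
  then show "a \<cdot>\<^sub>v u \<in> {x \<in> carrier_vec d. A *\<^sub>v x = c \<cdot>\<^sub>v x}" using u by auto
qed auto

lemma subspace_lincomb:
  assumes W: "is_subspace d W" and "finite J" and "\<forall>j\<in>J. f j \<in> W"
  shows "vec d (\<lambda>i. \<Sum>j\<in>J. c j * f j $ i) \<in> W"
  using assms(2,3)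
proof (induction J rule: finite_induct)
  case empty
  have "vec d (\<lambda>i. \<Sum>j\<in>{}. c j * f j $ i) = 0\<^sub>v d" by auto
  then show ?case using subspace_zero[OF W] by simp
next
  case (insert x F)
  have fx: "f x \<in> carrier_vec d" using insert subspace_carrier[OF W] by auto
  have "vec d (\<lambda>i. \<Sum>j\<in>insert x F. c j * f j $ i) = c x \<cdot>\<^sub>v f x + vec d (\<lambda>i. \<Sum>j\<in>F. c j * f j $ i)"
    using insert fx by auto
  then show ?case using insert subspace_add[OF W] subspace_smult[OF W] by auto
qed

lemma span_in_superset: "S \<subseteq> span_in d S"
  unfolding span_in_def by auto

lemma span_in_least: "is_subspace d W \<Longrightarrow> S \<subseteq> W \<Longrightarrow> span_in d S \<subseteq> W"
  unfolding span_in_def by auto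

lemma is_subspace_span_in:
  assumes "S \<subseteq> carrier_vec d"
  shows "is_subspace d (span_in d S)"
proof -
  have "carrier_vec d \<in> {W. is_subspace d W \<and> S \<subseteq> W}"
    using assms is_subspace_carrier_vec by auto
  then show ?thesis unfolding is_subspace_def span_in_def by (auto simp: is_subspace_def)
qed

lemma span_in_carrier: "S \<subseteq> carrier_vec d \<Longrightarrow> span_in d S \<subseteq> carrier_vec d"
  using is_subspace_span_in unfolding is_subspace_def by blast

lemma span_in_mono:
  assumes "S1 \<subseteq> span_in d S2" "S2 \<subseteq> carrier_vec d"
  shows "span_in d S1 \<subseteq> span_in d S2"
  using span_in_least[OF is_subspace_span_in[OF assms(2)] assms(1)] .

lemma span_in_invariant:
  assumes x: "x \<in> span_in d S" and S: "S \<subseteq> carrier_vec d" and A: "A \<in> carrier_mat d d"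
    and inv: "\<And>x. x \<in> S \<Longrightarrow> A *\<^sub>v x \<in> span_in d S"
  shows "A *\<^sub>v x \<in> span_in d S"
proof -
  have "span_in d S \<subseteq> {x \<in> carrier_vec d. A *\<^sub>v x \<in> span_in d S}"
    by (rule span_in_least[OF is_subspace_mat_preimage[OF A is_subspace_span_in[OF S]]])
      (use S inv in auto)
  then show ?thesis using x by auto
qed

section \<open>Adjoints, inner product and orthonormal frames\<close>

lemma adj_carrier[simp]: "A \<in> carrier_mat n k \<Longrightarrow> adj A \<in> carrier_mat k n"
  unfolding adj_def by auto

lemma adj_dims[simp]: "dim_row (adj A) = dim_col A" "dim_col (adj A) = dim_row A"
  unfolding adj_def by auto

lemma adj_index[simp]: "i < dim_col A \<Longrightarrow> j < dim_row A \<Longrightarrow> adj A $$ (i,j) = cnj (A $$ (j,i))"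
  unfolding adj_def by auto

lemma adj_adj[simp]: "adj (adj A) = A"
  by (rule eq_matI) (auto simp: adj_def)

lemma adj_mult_vec_carrier[simp]: "A \<in> carrier_mat n k \<Longrightarrow> w \<in> carrier_vec n \<Longrightarrow> adj A *\<^sub>v w \<in> carrier_vec k"
  by (metis adj_carrier mult_mat_vec_carrier)

lemma adj_mult:
  assumes "A \<in> carrier_mat n k" "B \<in> carrier_mat k l"
  shows "adj (A * B) = adj B * adj A"
  using assms by (intro eq_matI) (auto simp: scalar_prod_def intro!: sum.cong)

lemma adj_mult_index:
  assumes "\<Phi> \<in> carrier_mat d k" "\<Psi> \<in> carrier_mat d l" "j < k" "h < l"
  shows "(adj \<Phi> * \<Psi>) $$ (j,h) = (\<Sum>i<d. cnj (\<Phi> $$ (i,j)) * \<Psi> $$ (i,h))"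
  using assms by (auto simp: scalar_prod_def atLeast0LessThan intro!: sum.cong)

definition cinner :: "complex vec \<Rightarrow> complex vec \<Rightarrow> complex" where
  "cinner x y = (\<Sum>i<dim_vec x. x $ i * cnj (y $ i))"

lemma cinner_adj:
  assumes A: "A \<in> carrier_mat n k" and x: "x \<in> carrier_vec n" and y: "y \<in> carrier_vec k"
  shows "cinner x (A *\<^sub>v y) = cinner (adj A *\<^sub>v x) y"
proof -
  have "cinner x (A *\<^sub>v y) = (\<Sum>i<n. x $ i * cnj (\<Sum>l<k. A $$ (i,l) * y $ l))"
    unfolding cinner_def using A x y by (intro sum.cong) (auto simp: scalar_prod_def atLeast0LessThan)
  also have "\<dots> = (\<Sum>i<n. \<Sum>l<k. x $ i * cnj (A $$ (i,l)) * cnj (y $ l))"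
    by (simp add: cnj_sum sum_distrib_left mult.assoc)
  also have "\<dots> = (\<Sum>l<k. \<Sum>i<n. x $ i * cnj (A $$ (i,l)) * cnj (y $ l))"
    by (rule sum.swap)
  also have "\<dots> = (\<Sum>l<k. (\<Sum>i<n. cnj (A $$ (i,l)) * x $ i) * cnj (y $ l))"
    by (rule sum.cong) (auto simp: sum_distrib_right sum_distrib_left mult_ac)
  also have "\<dots> = cinner (adj A *\<^sub>v x) y"
    unfolding cinner_def using A x y by (intro sum.cong) (auto simp: scalar_prod_def atLeast0LessThan)
  finally show ?thesis .
qed

lemma cinner_adj':
  assumes "A \<in> carrier_mat n k" "x \<in> carrier_vec k" "y \<in> carrier_vec n"
  shows "cinner (A *\<^sub>v x) y = cinner x (adj A *\<^sub>v y)"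
  using cinner_adj[OF adj_carrier[OF assms(1)] assms(2,3)] by simp

lemma cinner_add: "x \<in> carrier_vec n \<Longrightarrow> y \<in> carrier_vec n \<Longrightarrow> cinner (x + y) z = cinner x z + cinner y z"
  unfolding cinner_def by (simp add: distrib_right sum.distrib)

lemma cinner_smult: "cinner (c \<cdot>\<^sub>v x) z = c * cinner x z"
  unfolding cinner_def by (simp add: sum_distrib_left mult.assoc)

lemma cinner_zero: "cinner (0\<^sub>v n) z = 0"
  unfolding cinner_def by simp

lemma cinner_self: "x \<in> carrier_vec n \<Longrightarrow> cinner x x = of_real (\<Sum>i<n. (cmod (x $ i))\<^sup>2)"
  unfolding cinner_def by (simp only: of_real_sum complex_norm_square) simp

lemma cinner_self_eq_0:
  assumes x: "x \<in> carrier_vec n" and "cinner x x = 0"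
  shows "x = 0\<^sub>v n"
proof -
  have "complex_of_real (\<Sum>i<n. (cmod (x $ i))\<^sup>2) = 0" using assms cinner_self[OF x] by metis
  then have "(\<Sum>i<n. (cmod (x $ i))\<^sup>2) = 0" by (simp only: of_real_eq_0_iff)
  then have "\<forall>i\<in>{..<n}. (cmod (x $ i))\<^sup>2 = 0" by (subst sum_nonneg_eq_0_iff[symmetric]) auto
  then show ?thesis using x by (intro eq_vecI) auto
qed

lemma normalize_vec_exists:
  assumes x: "x \<in> carrier_vec n" and "x \<noteq> 0\<^sub>v n"
  shows "\<exists>c. cinner (c \<cdot>\<^sub>v x) (c \<cdot>\<^sub>v x) = 1"
proof -
  define N where "N = (\<Sum>i<n. (cmod (x $ i))\<^sup>2)"
  have "N \<noteq> 0"
  proof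
    assume "N = 0"
    then have "cinner x x = 0" using cinner_self[OF x] unfolding N_def by simp
    then show False using assms cinner_self_eq_0[OF x] by blast
  qed
  moreover have "N \<ge> 0" unfolding N_def by (auto intro: sum_nonneg)
  ultimately have N: "N > 0" by auto
  define c where "c = complex_of_real (1 / sqrt N)"
  have "cinner (c \<cdot>\<^sub>v x) (c \<cdot>\<^sub>v x) = c * cnj c * cinner x x"
    unfolding cinner_def by (simp add: sum_distrib_left mult_ac)
  also have "\<dots> = 1"
  proof -
    have "(complex_of_real (sqrt N))\<^sup>2 = complex_of_real N"
      using N by (metis of_real_power real_sqrt_pow2 less_imp_le)
    then show ?thesis using N cinner_self[OF x] unfolding c_def N_def[symmetric]
      by (simp add: power2_eq_square[symmetric] power_one_over)
  qed
  finally show ?thesis by blast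
qed

definition isometry_mat :: "nat \<Rightarrow> nat \<Rightarrow> complex mat \<Rightarrow> bool" where
  "isometry_mat d k \<Phi> \<longleftrightarrow> \<Phi> \<in> carrier_mat d k \<and> adj \<Phi> * \<Phi> = 1\<^sub>m k"

definition orthonormal_frame :: "nat \<Rightarrow> complex vec set \<Rightarrow> nat \<Rightarrow> complex mat \<Rightarrow> bool" where
  "orthonormal_frame d W k \<Phi> \<longleftrightarrow> isometry_mat d k \<Phi> \<and> (\<forall>y\<in>carrier_vec k. \<Phi> *\<^sub>v y \<in> W) \<and>
     (\<forall>w\<in>W. \<Phi> *\<^sub>v (adj \<Phi> *\<^sub>v w) = w)"

lemma isometry_mat_adj_mult_vec:
  assumes "isometry_mat d k \<Phi>" "y \<in> carrier_vec k"
  shows "adj \<Phi> *\<^sub>v (\<Phi> *\<^sub>v y) = y"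
  using assms unfolding isometry_mat_def by (subst assoc_mult_mat_vec[symmetric]) auto

lemma isometry_mat_residual:
  assumes \<Phi>: "isometry_mat d k \<Phi>" and w: "w \<in> carrier_vec d"
  shows "adj \<Phi> *\<^sub>v (w - \<Phi> *\<^sub>v (adj \<Phi> *\<^sub>v w)) = 0\<^sub>v k"
proof -
  have P: "\<Phi> \<in> carrier_mat d k" using \<Phi> unfolding isometry_mat_def by auto
  have "adj \<Phi> *\<^sub>v (w - \<Phi> *\<^sub>v (adj \<Phi> *\<^sub>v w)) = adj \<Phi> *\<^sub>v w - adj \<Phi> *\<^sub>v (\<Phi> *\<^sub>v (adj \<Phi> *\<^sub>v w))"
    using P w by (subst mult_minus_distrib_mat_vec) auto
  then show ?thesis using isometry_mat_adj_mult_vec[OF \<Phi>] P w by simp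
qed

lemma isometry_mat_le:
  assumes "isometry_mat d k \<Phi>"
  shows "k \<le> d"
proof (rule ccontr)
  assume "\<not> k \<le> d"
  then have kd: "d < k" by auto
  have P: "\<Phi> \<in> carrier_mat d k" and PP: "adj \<Phi> * \<Phi> = 1\<^sub>m k"
    using assms unfolding isometry_mat_def by auto
  \<comment> \<open>pad \<open>\<Phi>\<close> with zero rows to a square matrix, which is then unitary but has a zero row\<close>
  define \<Psi> where "\<Psi> = mat k k (\<lambda>(i,j). if i < d then \<Phi> $$ (i,j) else 0)"
  have Pc: "\<Psi> \<in> carrier_mat k k" unfolding \<Psi>_def by auto
  have "adj \<Psi> * \<Psi> = 1\<^sub>m k"
  proof (rule eq_matI)
    fix j h assume j: "j < dim_row (1\<^sub>m k)" and h: "h < dim_col (1\<^sub>m k)"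
    have "(adj \<Psi> * \<Psi>) $$ (j,h) = (\<Sum>i<k. cnj (\<Psi> $$ (i,j)) * \<Psi> $$ (i,h))"
      using adj_mult_index[OF Pc Pc] j h by auto
    also have "\<dots> = (\<Sum>i<d. cnj (\<Psi> $$ (i,j)) * \<Psi> $$ (i,h))"
      by (rule sum.mono_neutral_right) (use kd j h in \<open>auto simp: \<Psi>_def\<close>)
    also have "\<dots> = (\<Sum>i<d. cnj (\<Phi> $$ (i,j)) * \<Phi> $$ (i,h))"
      by (rule sum.cong) (use kd j h in \<open>auto simp: \<Psi>_def\<close>)
    also have "\<dots> = (adj \<Phi> * \<Phi>) $$ (j,h)" using adj_mult_index[OF P P] j h by auto
    finally show "(adj \<Psi> * \<Psi>) $$ (j,h) = 1\<^sub>m k $$ (j,h)" using PP by simp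
  qed (use Pc in auto)
  then have "\<Psi> * adj \<Psi> = 1\<^sub>m k" using mat_mult_left_right_inverse[of "adj \<Psi>" k \<Psi>] Pc by auto
  then have "(\<Psi> * adj \<Psi>) $$ (k-1,k-1) = 1" using kd by auto
  moreover have "(\<Psi> * adj \<Psi>) $$ (k-1,k-1) = 0"
  proof -
    have "\<not> k - 1 < d" using kd by auto
    then show ?thesis using kd Pc by (auto simp: scalar_prod_def \<Psi>_def)
  qed
  ultimately show False by simp
qed

definition append_col :: "complex mat \<Rightarrow> complex vec \<Rightarrow> complex mat" where
  "append_col \<Phi> u = mat (dim_row \<Phi>) (Suc (dim_col \<Phi>)) (\<lambda>(i,j). if j < dim_col \<Phi> then \<Phi> $$ (i,j) else u $ i)"

lemma append_col_mult_vec: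
  assumes P: "\<Phi> \<in> carrier_mat d k" and u: "u \<in> carrier_vec d" and y: "y \<in> carrier_vec (Suc k)"
  shows "append_col \<Phi> u *\<^sub>v y = \<Phi> *\<^sub>v vec k (($) y) + y $ k \<cdot>\<^sub>v u"
proof (rule eq_vecI)
  fix i assume "i < dim_vec (\<Phi> *\<^sub>v vec k (($) y) + y $ k \<cdot>\<^sub>v u)"
  then have i: "i < d" using P u by auto
  have "(append_col \<Phi> u *\<^sub>v y) $ i = (\<Sum>j<Suc k. append_col \<Phi> u $$ (i,j) * y $ j)"
    using i y P by (auto simp: append_col_def scalar_prod_def atLeast0LessThan mult.commute intro!: sum.cong)
  also have "\<dots> = (\<Sum>j<k. \<Phi> $$ (i,j) * y $ j) + u $ i * y $ k"
    using i P by (simp add: append_col_def)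
  also have "(\<Sum>j<k. \<Phi> $$ (i,j) * y $ j) = (\<Phi> *\<^sub>v vec k (($) y)) $ i"
    using i P by (auto simp: scalar_prod_def atLeast0LessThan mult.commute intro!: sum.cong)
  finally show "(append_col \<Phi> u *\<^sub>v y) $ i = (\<Phi> *\<^sub>v vec k (($) y) + y $ k \<cdot>\<^sub>v u) $ i"
    using i P u by (auto simp: mult.commute)
qed (use P u in \<open>auto simp: append_col_def\<close>)

lemma isometry_mat_append_col:
  assumes \<Phi>: "isometry_mat d k \<Phi>" and u: "u \<in> carrier_vec d"
    and orth: "adj \<Phi> *\<^sub>v u = 0\<^sub>v k" and unit: "cinner u u = 1"
  shows "isometry_mat d (Suc k) (append_col \<Phi> u)"
proof -
  have P: "\<Phi> \<in> carrier_mat d k" and PP: "adj \<Phi> * \<Phi> = 1\<^sub>m k"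
    using \<Phi> unfolding isometry_mat_def by auto
  define \<Phi>' where "\<Phi>' = append_col \<Phi> u"
  have P': "\<Phi>' \<in> carrier_mat d (Suc k)" using P unfolding \<Phi>'_def append_col_def by auto
  have col: "\<Phi>' $$ (i,j) = (if j < k then \<Phi> $$ (i,j) else u $ i)" if "i < d" "j < Suc k" for i j
    using that P unfolding \<Phi>'_def append_col_def by auto
  have orth': "(\<Sum>i<d. cnj (\<Phi> $$ (i,j)) * u $ i) = 0" if "j < k" for j
  proof -
    have "(adj \<Phi> *\<^sub>v u) $ j = (\<Sum>i<d. cnj (\<Phi> $$ (i,j)) * u $ i)"
      using that P u by (auto simp: scalar_prod_def atLeast0LessThan intro!: sum.cong)
    then show ?thesis using orth that by auto
  qed
  have unit': "(\<Sum>i<d. cnj (u $ i) * u $ i) = 1"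
    using unit u unfolding cinner_def by (simp add: mult.commute)
  have "adj \<Phi>' * \<Phi>' = 1\<^sub>m (Suc k)"
  proof (rule eq_matI)
    fix j h assume "j < dim_row (1\<^sub>m (Suc k))" "h < dim_col (1\<^sub>m (Suc k))"
    then have j: "j < Suc k" and h: "h < Suc k" by auto
    have "(adj \<Phi>' * \<Phi>') $$ (j,h) = (\<Sum>i<d. cnj (\<Phi>' $$ (i,j)) * \<Phi>' $$ (i,h))"
      using adj_mult_index[OF P' P'] j h by auto
    also have "\<dots> = (\<Sum>i<d. cnj (if j < k then \<Phi> $$ (i,j) else u $ i) * (if h < k then \<Phi> $$ (i,h) else u $ i))"
      using j h by (intro sum.cong) (auto simp: col)
    also have "\<dots> = 1\<^sub>m (Suc k) $$ (j,h)"
    proof (cases "j < k"; cases "h < k")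
      assume "j < k" "h < k"
      then show ?thesis using adj_mult_index[OF P P] PP by auto
    next
      assume "j < k" "\<not> h < k"
      then show ?thesis using orth' h by auto
    next
      assume "\<not> j < k" "h < k"
      then have "(\<Sum>i<d. cnj (u $ i) * \<Phi> $$ (i,h)) = cnj (\<Sum>i<d. cnj (\<Phi> $$ (i,h)) * u $ i)"
        by (simp add: cnj_sum mult.commute)
      then show ?thesis using orth' \<open>h < k\<close> \<open>\<not> j < k\<close> j by auto
    next
      assume "\<not> j < k" "\<not> h < k"
      then show ?thesis using unit' j h by auto
    qed
    finally show "(adj \<Phi>' * \<Phi>') $$ (j,h) = 1\<^sub>m (Suc k) $$ (j,h)" .
  qed (use P' in auto)
  then show ?thesis using P' unfolding isometry_mat_def \<Phi>'_def by auto
qed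

lemma isometry_mat_extend:
  assumes W: "is_subspace d W" and \<Phi>: "isometry_mat d k \<Phi>" and rng: "\<forall>y\<in>carrier_vec k. \<Phi> *\<^sub>v y \<in> W"
    and wW: "w \<in> W" and ne: "\<Phi> *\<^sub>v (adj \<Phi> *\<^sub>v w) \<noteq> w"
  shows "\<exists>\<Phi>'. isometry_mat d (Suc k) \<Phi>' \<and> (\<forall>y\<in>carrier_vec (Suc k). \<Phi>' *\<^sub>v y \<in> W)"
proof -
  have P: "\<Phi> \<in> carrier_mat d k" using \<Phi> unfolding isometry_mat_def by auto
  have w: "w \<in> carrier_vec d" using subspace_carrier[OF W wW] .
  define r where "r = w - \<Phi> *\<^sub>v (adj \<Phi> *\<^sub>v w)"
  have r: "r \<in> carrier_vec d" unfolding r_def using w P by auto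
  have rW: "r \<in> W" unfolding r_def using P w by (intro subspace_minus[OF W wW] rng[rule_format]) auto
  have "r \<noteq> 0\<^sub>v d"
  proof
    assume "r = 0\<^sub>v d"
    then have "w = \<Phi> *\<^sub>v (adj \<Phi> *\<^sub>v w)"
      using eq_if_minus_vec_eq_0[of w d "\<Phi> *\<^sub>v (adj \<Phi> *\<^sub>v w)"] w P unfolding r_def by auto
    then show False using ne by simp
  qed
  then obtain c where unit: "cinner (c \<cdot>\<^sub>v r) (c \<cdot>\<^sub>v r) = 1" using normalize_vec_exists[OF r] by blast
  have orth: "adj \<Phi> *\<^sub>v (c \<cdot>\<^sub>v r) = 0\<^sub>v k"
    using isometry_mat_residual[OF \<Phi> w] unfolding r_def[symmetric] mult_mat_vec[OF adj_carrier[OF P] r]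
    by auto
  have "isometry_mat d (Suc k) (append_col \<Phi> (c \<cdot>\<^sub>v r))"
    using isometry_mat_append_col[OF \<Phi> _ orth unit] r by auto
  moreover have "append_col \<Phi> (c \<cdot>\<^sub>v r) *\<^sub>v y \<in> W" if "y \<in> carrier_vec (Suc k)" for y
    unfolding append_col_mult_vec[OF P smult_carrier_vec[THEN iffD2, OF r] that]
    by (intro subspace_add[OF W] subspace_smult[OF W] rng[rule_format] rW) auto
  ultimately show ?thesis by blast
qed

text \<open>An isometry into \<open>W\<close> of maximal width exists since widths are bounded by \<open>d\<close>; by
  maximality it cannot be extended, so it reproduces every vector of \<open>W\<close>.\<close>
lemma orthonormal_frame_exists:
  assumes W: "is_subspace d W"
  shows "\<exists>k \<Phi>. orthonormal_frame d W k \<Phi>"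
proof -
  define KK where "KK = {k. \<exists>\<Phi>. isometry_mat d k \<Phi> \<and> (\<forall>y\<in>carrier_vec k. \<Phi> *\<^sub>v y \<in> W)}"
  have "isometry_mat d 0 (0\<^sub>m d 0)" unfolding isometry_mat_def by (auto intro!: eq_matI)
  moreover have "0\<^sub>m d 0 *\<^sub>v y \<in> W" if "y \<in> carrier_vec 0" for y :: "complex vec"
    using subspace_zero[OF W] by (metis mult_mat_zero_vec zero_carrier_mat that vec_of_dim_0 carrier_vecD)
  ultimately have "0 \<in> KK" unfolding KK_def by blast
  have fin: "finite KK"
    using isometry_mat_le by (intro finite_subset[of KK "{..d}"]) (auto simp: KK_def)
  define k where "k = Max KK"
  have "k \<in> KK" unfolding k_def using fin \<open>0 \<in> KK\<close> by (intro Max_in) auto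
  then obtain \<Phi> where \<Phi>: "isometry_mat d k \<Phi>" and rng: "\<forall>y\<in>carrier_vec k. \<Phi> *\<^sub>v y \<in> W"
    unfolding KK_def by auto
  have "\<Phi> *\<^sub>v (adj \<Phi> *\<^sub>v w) = w" if "w \<in> W" for w
  proof (rule ccontr)
    assume "\<Phi> *\<^sub>v (adj \<Phi> *\<^sub>v w) \<noteq> w"
    then have "Suc k \<in> KK" using isometry_mat_extend[OF W \<Phi> rng that] unfolding KK_def by blast
    then show False using fin Max_ge[of KK "Suc k"] unfolding k_def[symmetric] by auto
  qed
  then show ?thesis using \<Phi> rng unfolding orthonormal_frame_def by blast
qed

lemma orthonormal_frame_dim_pos:
  assumes F: "orthonormal_frame d W k \<Phi>" and W: "is_subspace d W" and nz: "W \<noteq> {0\<^sub>v d}"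
  shows "0 < k"
proof (rule ccontr)
  assume "\<not> 0 < k"
  then have P: "\<Phi> \<in> carrier_mat d 0" using F unfolding orthonormal_frame_def isometry_mat_def by auto
  have "w = 0\<^sub>v d" if "w \<in> W" for w
  proof -
    have "adj \<Phi> *\<^sub>v w = 0\<^sub>v 0" using P subspace_carrier[OF W that] by (intro eq_vecI) auto
    then show ?thesis using F that mult_mat_zero_vec[OF P] unfolding orthonormal_frame_def by metis
  qed
  then show False using nz subspace_zero[OF W] by blast
qed

lemma orthonormal_frame_dim_less:
  assumes F: "orthonormal_frame d W k \<Phi>" and W: "W \<subseteq> carrier_vec d" and proper: "W \<noteq> carrier_vec d"
  shows "k < d"
proof -
  have \<Phi>: "isometry_mat d k \<Phi>" and rng: "\<forall>y\<in>carrier_vec k. \<Phi> *\<^sub>v y \<in> W"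
    using F unfolding orthonormal_frame_def by auto
  have P: "\<Phi> \<in> carrier_mat d k" and PP: "adj \<Phi> * \<Phi> = 1\<^sub>m k" using \<Phi> unfolding isometry_mat_def by auto
  have "k \<noteq> d"
  proof
    assume kd: "k = d"
    then have "\<Phi> * adj \<Phi> = 1\<^sub>m d" using mat_mult_left_right_inverse[of "adj \<Phi>" d \<Phi>] P PP by auto
    then have "y = \<Phi> *\<^sub>v (adj \<Phi> *\<^sub>v y)" if "y \<in> carrier_vec d" for y
      using that P kd by (metis assoc_mult_mat_vec adj_carrier one_mult_mat_vec)
    then have "carrier_vec d \<subseteq> W" using rng P kd by (metis adj_carrier mult_mat_vec_carrier subsetI)
    then show False using W proper by auto
  qed
  then show ?thesis using isometry_mat_le[OF \<Phi>] by auto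
qed


section \<open>Kronecker products\<close>

lemma sum_nat_div_mod: fixes p q :: nat shows "(\<Sum>k<p*q. f (k div q) (k mod q)) = (\<Sum>a<p. \<Sum>b<q. f a b)"
proof -
  have "(\<Sum>k<p*q. f (k div q) (k mod q)) = (\<Sum>ab\<in>{..<p}\<times>{..<q}. f (fst ab) (snd ab))"
  proof (rule sum.reindex_bij_witness[of _ "\<lambda>ab. fst ab * q + snd ab" "\<lambda>k. (k div q, k mod q)"])
    fix k assume k: "k \<in> {..<p*q}"
    then have q: "q > 0" by (cases "q = 0") auto
    show "fst (k div q, k mod q) * q + snd (k div q, k mod q) = k" by simp
    show "(k div q, k mod q) \<in> {..<p} \<times> {..<q}" using k q by (auto simp: less_mult_imp_div_less)
    show "f (fst (k div q, k mod q)) (snd (k div q, k mod q)) = f (k div q) (k mod q)" by simp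
  next
    fix ab assume ab: "ab \<in> {..<p} \<times> {..<q}"
    then obtain a b where e: "ab = (a,b)" and a: "a < p" and b: "b < q" by auto
    show "((fst ab * q + snd ab) div q, (fst ab * q + snd ab) mod q) = ab" using e b by auto
    have "a * q + b < a * q + q" using b by auto
    also have "\<dots> = (Suc a) * q" by simp
    also have "\<dots> \<le> p * q" using a by (intro mult_right_mono) auto
    finally show "fst ab * q + snd ab \<in> {..<p*q}" using e by auto
  qed
  also have "\<dots> = (\<Sum>a<p. \<Sum>b<q. f a b)" by (subst sum.cartesian_product) (simp add: case_prod_beta)
  finally show ?thesis .
qed

lemma kron_carrier_mat[simp]: "A \<in> carrier_mat p p' \<Longrightarrow> B \<in> carrier_mat q q' \<Longrightarrow> kron A B \<in> carrier_mat (p*q) (p'*q')"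
  unfolding kron_def by auto
lemma kron_vec_carrier[simp]: "u \<in> carrier_vec p \<Longrightarrow> v \<in> carrier_vec q \<Longrightarrow> kron_vec u v \<in> carrier_vec (p*q)"
  unfolding kron_vec_def by auto

lemma div_mod_less: fixes p q i :: nat assumes "i < p * q" shows "i div q < p" "i mod q < q"
proof -
  have q: "q > 0" using assms by (cases "q = 0") auto
  show "i div q < p" using assms q by (simp add: less_mult_imp_div_less)
  show "i mod q < q" using q by auto
qed

lemma kron_mult_kron_vec:
  assumes A: "A \<in> carrier_mat p p'" and B: "B \<in> carrier_mat q q'" and u: "u \<in> carrier_vec p'" and v: "v \<in> carrier_vec q'"
  shows "kron A B *\<^sub>v kron_vec u v = kron_vec (A *\<^sub>v u) (B *\<^sub>v v)"
proof (rule eq_vecI)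
  fix i assume "i < dim_vec (kron_vec (A *\<^sub>v u) (B *\<^sub>v v))"
  then have i: "i < p * q" using A B unfolding kron_vec_def by auto
  note bd = div_mod_less[OF i]
  have "(kron A B *\<^sub>v kron_vec u v) $ i = (\<Sum>k<p'*q'. A $$ (i div q, k div q') * B $$ (i mod q, k mod q') * (u $ (k div q') * v $ (k mod q')))"
    using i A B u v by (auto simp: kron_def kron_vec_def scalar_prod_def atLeast0LessThan row_def intro!: sum.cong dest: div_mod_less)
  also have "\<dots> = (\<Sum>a<p'. \<Sum>b<q'. A $$ (i div q, a) * B $$ (i mod q, b) * (u $ a * v $ b))"
    by (rule sum_nat_div_mod)
  also have "\<dots> = (\<Sum>a<p'. A $$ (i div q, a) * u $ a) * (\<Sum>b<q'. B $$ (i mod q, b) * v $ b)"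
    by (simp add: sum_product mult_ac)
  also have "\<dots> = (kron_vec (A *\<^sub>v u) (B *\<^sub>v v)) $ i"
    using i A B u v bd by (auto simp: kron_vec_def scalar_prod_def atLeast0LessThan)
  finally show "(kron A B *\<^sub>v kron_vec u v) $ i = kron_vec (A *\<^sub>v u) (B *\<^sub>v v) $ i" .
qed (use A B in \<open>auto simp: kron_def kron_vec_def\<close>)

lemma kron_mult_kron:
  assumes A: "A \<in> carrier_mat p p'" and B: "B \<in> carrier_mat q q'" and C: "C \<in> carrier_mat p' p''" and D: "D \<in> carrier_mat q' q''"
  shows "kron A B * kron C D = kron (A * C) (B * D)"
proof (rule eq_matI)
  fix i j assume "i < dim_row (kron (A * C) (B * D))" "j < dim_col (kron (A * C) (B * D))"
  then have i: "i < p * q" and j: "j < p'' * q''" using A B C D unfolding kron_def by auto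
  note bi = div_mod_less[OF i] and bj = div_mod_less[OF j]
  have "(kron A B * kron C D) $$ (i,j) = (\<Sum>k<p'*q'. A $$ (i div q, k div q') * B $$ (i mod q, k mod q') * (C $$ (k div q', j div q'') * D $$ (k mod q', j mod q'')))"
    using i j A B C D by (auto simp: kron_def scalar_prod_def atLeast0LessThan row_def col_def intro!: sum.cong dest: div_mod_less)
  also have "\<dots> = (\<Sum>a<p'. \<Sum>b<q'. A $$ (i div q, a) * B $$ (i mod q, b) * (C $$ (a, j div q'') * D $$ (b, j mod q'')))"
    by (rule sum_nat_div_mod)
  also have "\<dots> = (\<Sum>a<p'. A $$ (i div q, a) * C $$ (a, j div q'')) * (\<Sum>b<q'. B $$ (i mod q, b) * D $$ (b, j mod q''))"
    by (simp add: sum_product mult_ac)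
  also have "\<dots> = kron (A * C) (B * D) $$ (i,j)"
    using i j A B C D bi bj by (auto simp: kron_def scalar_prod_def atLeast0LessThan row_def col_def)
  finally show "(kron A B * kron C D) $$ (i,j) = kron (A * C) (B * D) $$ (i,j)" .
qed (use A B C D in \<open>auto simp: kron_def\<close>)

lemma kron_vec_add_left: "u \<in> carrier_vec p \<Longrightarrow> u' \<in> carrier_vec p \<Longrightarrow> v \<in> carrier_vec q \<Longrightarrow>
  kron_vec (u + u') v = kron_vec u v + kron_vec u' v"
  by (intro eq_vecI) (auto simp: kron_vec_def distrib_right dest: div_mod_less)
lemma kron_vec_add_right: "u \<in> carrier_vec p \<Longrightarrow> v \<in> carrier_vec q \<Longrightarrow> v' \<in> carrier_vec q \<Longrightarrow>
  kron_vec u (v + v') = kron_vec u v + kron_vec u v'"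
  by (intro eq_vecI) (auto simp: kron_vec_def distrib_left dest: div_mod_less)
lemma kron_vec_smult_left: "u \<in> carrier_vec p \<Longrightarrow> v \<in> carrier_vec q \<Longrightarrow> kron_vec (c \<cdot>\<^sub>v u) v = c \<cdot>\<^sub>v kron_vec u v"
  by (intro eq_vecI) (auto simp: kron_vec_def mult.assoc dest: div_mod_less)
lemma kron_vec_smult_right: "u \<in> carrier_vec p \<Longrightarrow> v \<in> carrier_vec q \<Longrightarrow> kron_vec u (c \<cdot>\<^sub>v v) = c \<cdot>\<^sub>v kron_vec u v"
  by (intro eq_vecI) (auto simp: kron_vec_def mult_ac dest: div_mod_less)
lemma kron_vec_zero_left: "v \<in> carrier_vec q \<Longrightarrow> kron_vec (0\<^sub>v p) v = 0\<^sub>v (p*q)"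
  by (intro eq_vecI) (auto simp: kron_vec_def dest: div_mod_less)
lemma kron_vec_zero_right: "u \<in> carrier_vec p \<Longrightarrow> kron_vec u (0\<^sub>v q) = 0\<^sub>v (p*q)"
  by (intro eq_vecI) (auto simp: kron_vec_def dest: div_mod_less)

lemma kron_vec_in_span:
  assumes S1: "S1 \<subseteq> carrier_vec p" and S2: "S2 \<subseteq> carrier_vec q"
    and u: "u \<in> span_in p S1" and v: "v \<in> span_in q S2"
  shows "kron_vec u v \<in> span_in (p*q) {kron_vec s t | s t. s \<in> S1 \<and> t \<in> S2}"
proof -
  define T where "T = span_in (p*q) {kron_vec s t | s t. s \<in> S1 \<and> t \<in> S2}"
  have Tc: "{kron_vec s t | s t. s \<in> S1 \<and> t \<in> S2} \<subseteq> carrier_vec (p*q)" using S1 S2 by (blast intro: kron_vec_carrier)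
  have Ts: "is_subspace (p*q) T" unfolding T_def using is_subspace_span_in[OF Tc] .
  have A: "span_in q S2 \<subseteq> {v \<in> carrier_vec q. kron_vec s v \<in> T}" if s: "s \<in> S1" for s
  proof (rule span_in_least)
    have sc: "s \<in> carrier_vec p" using s S1 by auto
    show "is_subspace q {v \<in> carrier_vec q. kron_vec s v \<in> T}"
      by (rule is_subspace_linear_preimage[OF Ts]) (use sc in \<open>auto simp: kron_vec_add_right kron_vec_smult_right kron_vec_zero_right\<close>)
    show "S2 \<subseteq> {v \<in> carrier_vec q. kron_vec s v \<in> T}" unfolding T_def using S2 s by (blast intro: subsetD[OF span_in_superset])
  qed
  have vc: "v \<in> carrier_vec q" using span_in_carrier[OF S2] v by auto
  have B: "span_in p S1 \<subseteq> {u \<in> carrier_vec p. kron_vec u v \<in> T}"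
  proof (rule span_in_least)
    show "is_subspace p {u \<in> carrier_vec p. kron_vec u v \<in> T}"
      by (rule is_subspace_linear_preimage[OF Ts]) (use vc in \<open>auto simp: kron_vec_add_left kron_vec_smult_left kron_vec_zero_left\<close>)
    show "S1 \<subseteq> {u \<in> carrier_vec p. kron_vec u v \<in> T}" using A v S1 by auto
  qed
  show ?thesis using B u unfolding T_def by auto
qed

lemma in_span_kron_vecs:
  fixes x :: "complex vec"
  assumes x: "x \<in> carrier_vec (p*q)"
  shows "x \<in> span_in (p*q) {kron_vec u v | u v. u \<in> carrier_vec p \<and> v \<in> carrier_vec q}"
proof -
  define S where "S = span_in (p*q) {kron_vec u v | u v. (u :: complex vec) \<in> carrier_vec p \<and> v \<in> carrier_vec q}"
  have Sc: "{kron_vec u v | u v. (u :: complex vec) \<in> carrier_vec p \<and> v \<in> carrier_vec q} \<subseteq> carrier_vec (p*q)" by (blast intro: kron_vec_carrier)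
  define J where "J = {..<p} \<times> {..<q}"
  define f where "f = (\<lambda>ab. kron_vec (unit_vec p (fst ab)) (unit_vec q (snd ab)) :: complex vec)"
  define c where "c = (\<lambda>ab. x $ (fst ab * q + snd ab))"
  have "vec (p*q) (\<lambda>i. \<Sum>j\<in>J. c j * f j $ i) \<in> S"
    unfolding S_def by (rule subspace_lincomb[OF is_subspace_span_in[OF Sc]]) (auto simp: J_def f_def intro!: subsetD[OF span_in_superset] unit_vec_carrier)
  moreover have "vec (p*q) (\<lambda>i. \<Sum>j\<in>J. c j * f j $ i) = x"
  proof (rule eq_vecI)
    fix i assume "i < dim_vec x"
    then have i: "i < p*q" using x by auto
    note b = div_mod_less[OF i]
    have "(\<Sum>j\<in>J. c j * f j $ i) = (\<Sum>j\<in>J. if j = (i div q, i mod q) then c j else 0)"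
    proof (rule sum.cong)
      fix j assume "j \<in> J"
      then obtain a bb where j: "j = (a, bb)" "a < p" "bb < q" unfolding J_def by auto
      show "c j * f j $ i = (if j = (i div q, i mod q) then c j else 0)"
        using i b j by (auto simp: f_def kron_vec_def unit_vec_def)
    qed simp
    also have "\<dots> = c (i div q, i mod q)" using b unfolding J_def by (simp add: sum.delta')
    also have "\<dots> = x $ i" unfolding c_def by simp
    finally show "vec (p*q) (\<lambda>i. \<Sum>j\<in>J. c j * f j $ i) $ i = x $ i" using i by simp
  qed (use x in simp)
  ultimately show ?thesis unfolding S_def by simp
qed


section \<open>Unitary representations and complete reducibility\<close>

lemma unitary_rep_carrier: "unitary_rep G d \<rho> \<Longrightarrow> g \<in> carrier G \<Longrightarrow> \<rho> g \<in> carrier_mat d d"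
  unfolding unitary_rep_def unitary_mat_def by auto

lemma unitary_rep_one:
  assumes G: "group G" and r: "unitary_rep G d \<rho>"
  shows "\<rho> \<one>\<^bsub>G\<^esub> = 1\<^sub>m d"
proof -
  have o: "\<one>\<^bsub>G\<^esub> \<in> carrier G" using G by (simp add: group.is_monoid monoid.one_closed)
  have c: "\<rho> \<one>\<^bsub>G\<^esub> \<in> carrier_mat d d" using unitary_rep_carrier[OF r o] .
  have u: "adj (\<rho> \<one>\<^bsub>G\<^esub>) * \<rho> \<one>\<^bsub>G\<^esub> = 1\<^sub>m d"
    using r o unfolding unitary_rep_def unitary_mat_def by auto
  have h: "\<rho> \<one>\<^bsub>G\<^esub> = \<rho> \<one>\<^bsub>G\<^esub> * \<rho> \<one>\<^bsub>G\<^esub>"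
    using r o G unfolding unitary_rep_def by (metis group.is_monoid monoid.l_one)
  have "\<rho> \<one>\<^bsub>G\<^esub> = adj (\<rho> \<one>\<^bsub>G\<^esub>) * \<rho> \<one>\<^bsub>G\<^esub> * \<rho> \<one>\<^bsub>G\<^esub>" using u c by simp
  also have "\<dots> = adj (\<rho> \<one>\<^bsub>G\<^esub>) * (\<rho> \<one>\<^bsub>G\<^esub> * \<rho> \<one>\<^bsub>G\<^esub>)"
    using c by (simp add: assoc_mult_mat[of _ d d _ d _ d])
  also have "\<dots> = 1\<^sub>m d" using h u by simp
  finally show ?thesis .
qed

lemma unitary_rep_inv:
  assumes G: "group G" and r: "unitary_rep G d \<rho>" and g: "g \<in> carrier G"
  shows "\<rho> (inv\<^bsub>G\<^esub> g) = adj (\<rho> g)"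
proof -
  have ig: "inv\<^bsub>G\<^esub> g \<in> carrier G" using G g by (simp add: group.inv_closed)
  have c: "\<rho> g \<in> carrier_mat d d" "\<rho> (inv\<^bsub>G\<^esub> g) \<in> carrier_mat d d"
    using unitary_rep_carrier[OF r] g ig by auto
  have u: "adj (\<rho> g) * \<rho> g = 1\<^sub>m d" using r g unfolding unitary_rep_def unitary_mat_def by auto
  have h: "\<rho> g * \<rho> (inv\<^bsub>G\<^esub> g) = 1\<^sub>m d"
    using r g ig G unitary_rep_one[OF G r] unfolding unitary_rep_def by (metis group.r_inv)
  have "\<rho> (inv\<^bsub>G\<^esub> g) = adj (\<rho> g) * \<rho> g * \<rho> (inv\<^bsub>G\<^esub> g)" using u c by simp
  also have "\<dots> = adj (\<rho> g) * (\<rho> g * \<rho> (inv\<^bsub>G\<^esub> g))"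
    using c by (simp add: assoc_mult_mat[of _ d d _ d _ d])
  also have "\<dots> = adj (\<rho> g)" using h c by simp
  finally show ?thesis .
qed

text \<open>If the range of the isometry \<open>\<Phi>\<close> is invariant, this is the subrepresentation on that range,
  written in the coordinates given by the columns of \<open>\<Phi>\<close>.\<close>
definition compress :: "complex mat \<Rightarrow> ('g \<Rightarrow> complex mat) \<Rightarrow> 'g \<Rightarrow> complex mat" where
  "compress \<Phi> \<rho> g = adj \<Phi> * \<rho> g * \<Phi>"

definition invariant_isometry :: "('g, 'b) monoid_scheme \<Rightarrow> nat \<Rightarrow> ('g \<Rightarrow> complex mat)
    \<Rightarrow> complex vec set \<Rightarrow> nat \<Rightarrow> complex mat \<Rightarrow> bool" where
  "invariant_isometry G m \<rho> V k \<Phi> \<longleftrightarrow> isometry_mat m k \<Phi> \<and> (\<forall>y\<in>carrier_vec k. \<Phi> *\<^sub>v y \<in> V) \<and>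
     (\<forall>g\<in>carrier G. \<forall>y\<in>carrier_vec k. \<exists>z\<in>carrier_vec k. \<rho> g *\<^sub>v (\<Phi> *\<^sub>v y) = \<Phi> *\<^sub>v z)"

lemma compress_carrier:
  "unitary_rep G m \<rho> \<Longrightarrow> \<Phi> \<in> carrier_mat m k \<Longrightarrow> g \<in> carrier G \<Longrightarrow> compress \<Phi> \<rho> g \<in> carrier_mat k k"
  unfolding compress_def by (meson adj_carrier mult_carrier_mat unitary_rep_carrier)

lemma compress_mult_vec:
  assumes r: "unitary_rep G m \<rho>" and P: "\<Phi> \<in> carrier_mat m k" and "g \<in> carrier G"
    and y: "y \<in> carrier_vec k"
  shows "compress \<Phi> \<rho> g *\<^sub>v y = adj \<Phi> *\<^sub>v (\<rho> g *\<^sub>v (\<Phi> *\<^sub>v y))"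
proof -
  have g: "\<rho> g \<in> carrier_mat m m" using unitary_rep_carrier[OF r \<open>g \<in> carrier G\<close>] .
  have "compress \<Phi> \<rho> g *\<^sub>v y = (adj \<Phi> * \<rho> g) *\<^sub>v (\<Phi> *\<^sub>v y)"
    unfolding compress_def using P g y by (subst assoc_mult_mat_vec) auto
  also have "\<dots> = adj \<Phi> *\<^sub>v (\<rho> g *\<^sub>v (\<Phi> *\<^sub>v y))"
    using P g y by (subst assoc_mult_mat_vec) auto
  finally show ?thesis .
qed

lemma invariant_isometry_mult_vec:
  assumes r: "unitary_rep G m \<rho>" and \<Phi>: "invariant_isometry G m \<rho> V k \<Phi>"
    and g: "g \<in> carrier G" and y: "y \<in> carrier_vec k"
  shows "\<Phi> *\<^sub>v (compress \<Phi> \<rho> g *\<^sub>v y) = \<rho> g *\<^sub>v (\<Phi> *\<^sub>v y)"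
proof -
  have iso: "isometry_mat m k \<Phi>" using \<Phi> unfolding invariant_isometry_def by auto
  then have P: "\<Phi> \<in> carrier_mat m k" unfolding isometry_mat_def by auto
  obtain z where z: "z \<in> carrier_vec k" and e: "\<rho> g *\<^sub>v (\<Phi> *\<^sub>v y) = \<Phi> *\<^sub>v z"
    using \<Phi> g y unfolding invariant_isometry_def by blast
  have "compress \<Phi> \<rho> g *\<^sub>v y = z"
    unfolding compress_mult_vec[OF r P g y] e
    using isometry_mat_adj_mult_vec[OF iso z] .
  then show ?thesis using e by simp
qed

lemma invariant_isometry_intertwines:
  assumes r: "unitary_rep G m \<rho>" and \<Phi>: "invariant_isometry G m \<rho> V k \<Phi>" and g: "g \<in> carrier G"
  shows "\<rho> g * \<Phi> = \<Phi> * compress \<Phi> \<rho> g"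
proof -
  have P: "\<Phi> \<in> carrier_mat m k" using \<Phi> unfolding invariant_isometry_def isometry_mat_def by auto
  have rg: "\<rho> g \<in> carrier_mat m m" using unitary_rep_carrier[OF r g] .
  show ?thesis
  proof (rule mat_eq_by_mult_vec)
    fix y :: "complex vec" assume y: "y \<in> carrier_vec k"
    show "(\<rho> g * \<Phi>) *\<^sub>v y = (\<Phi> * compress \<Phi> \<rho> g) *\<^sub>v y"
      using invariant_isometry_mult_vec[OF r \<Phi> g y] rg P compress_carrier[OF r P g] y
      by (simp add: assoc_mult_mat_vec)
  qed (use P rg compress_carrier[OF r P g] in auto)
qed

lemma compress_mult:
  assumes G: "group G" and r: "unitary_rep G m \<rho>" and \<Phi>: "invariant_isometry G m \<rho> V k \<Phi>"
    and g: "g \<in> carrier G" and h: "h \<in> carrier G"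
  shows "compress \<Phi> \<rho> (g \<otimes>\<^bsub>G\<^esub> h) = compress \<Phi> \<rho> g * compress \<Phi> \<rho> h"
proof (rule mat_eq_by_mult_vec)
  have P: "\<Phi> \<in> carrier_mat m k" using \<Phi> unfolding invariant_isometry_def isometry_mat_def by auto
  have rc: "\<And>g. g \<in> carrier G \<Longrightarrow> \<rho> g \<in> carrier_mat m m" using unitary_rep_carrier[OF r] .
  have gh: "g \<otimes>\<^bsub>G\<^esub> h \<in> carrier G" using G g h by (simp add: group.is_monoid monoid.m_closed)
  show "compress \<Phi> \<rho> (g \<otimes>\<^bsub>G\<^esub> h) \<in> carrier_mat k k" using compress_carrier[OF r P gh] .
  show "compress \<Phi> \<rho> g * compress \<Phi> \<rho> h \<in> carrier_mat k k"
    using compress_carrier[OF r P g] compress_carrier[OF r P h] by auto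
  fix y :: "complex vec" assume y: "y \<in> carrier_vec k"
  have "compress \<Phi> \<rho> (g \<otimes>\<^bsub>G\<^esub> h) *\<^sub>v y = adj \<Phi> *\<^sub>v ((\<rho> g * \<rho> h) *\<^sub>v (\<Phi> *\<^sub>v y))"
    using compress_mult_vec[OF r P gh y] r g h unfolding unitary_rep_def by auto
  also have "\<dots> = adj \<Phi> *\<^sub>v (\<rho> g *\<^sub>v (\<Phi> *\<^sub>v (compress \<Phi> \<rho> h *\<^sub>v y)))"
    using rc[OF g] rc[OF h] P y invariant_isometry_mult_vec[OF r \<Phi> h y] by (subst assoc_mult_mat_vec) auto
  also have "\<dots> = (compress \<Phi> \<rho> g * compress \<Phi> \<rho> h) *\<^sub>v y"
    using compress_mult_vec[OF r P g] compress_carrier[OF r P g] compress_carrier[OF r P h] y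
    by (simp add: assoc_mult_mat_vec)
  finally show "compress \<Phi> \<rho> (g \<otimes>\<^bsub>G\<^esub> h) *\<^sub>v y = (compress \<Phi> \<rho> g * compress \<Phi> \<rho> h) *\<^sub>v y" .
qed

lemma adj_compress:
  assumes G: "group G" and r: "unitary_rep G m \<rho>" and P: "\<Phi> \<in> carrier_mat m k" and g: "g \<in> carrier G"
  shows "adj (compress \<Phi> \<rho> g) = compress \<Phi> \<rho> (inv\<^bsub>G\<^esub> g)"
proof -
  have rg: "\<rho> g \<in> carrier_mat m m" using unitary_rep_carrier[OF r g] .
  have "adj (compress \<Phi> \<rho> g) = adj \<Phi> * adj (adj \<Phi> * \<rho> g)"
    unfolding compress_def using P rg by (intro adj_mult[of _ k m]) auto
  also have "adj (adj \<Phi> * \<rho> g) = adj (\<rho> g) * \<Phi>" using adj_mult[OF adj_carrier[OF P] rg] by simp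
  also have "adj \<Phi> * (adj (\<rho> g) * \<Phi>) = adj \<Phi> * adj (\<rho> g) * \<Phi>"
    using P rg by (subst assoc_mult_mat[of _ k m _ m _ k]) auto
  finally show ?thesis unfolding compress_def unitary_rep_inv[OF G r g] .
qed

lemma compress_unitary_rep:
  assumes G: "group G" and r: "unitary_rep G m \<rho>" and \<Phi>: "invariant_isometry G m \<rho> V k \<Phi>"
  shows "unitary_rep G k (compress \<Phi> \<rho>)"
proof -
  have P: "\<Phi> \<in> carrier_mat m k" and PP: "adj \<Phi> * \<Phi> = 1\<^sub>m k"
    using \<Phi> unfolding invariant_isometry_def isometry_mat_def by auto
  have one: "compress \<Phi> \<rho> \<one>\<^bsub>G\<^esub> = 1\<^sub>m k"
    unfolding compress_def unitary_rep_one[OF G r] using P PP by simp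
  have "unitary_mat k (compress \<Phi> \<rho> g)" if g: "g \<in> carrier G" for g
  proof -
    have ig: "inv\<^bsub>G\<^esub> g \<in> carrier G" using G g by (simp add: group.inv_closed)
    have "compress \<Phi> \<rho> g * adj (compress \<Phi> \<rho> g) = 1\<^sub>m k"
      unfolding adj_compress[OF G r P g] compress_mult[OF G r \<Phi> g ig, symmetric]
      using G g one by (simp add: group.r_inv)
    moreover have "adj (compress \<Phi> \<rho> g) * compress \<Phi> \<rho> g = 1\<^sub>m k"
      unfolding adj_compress[OF G r P g] compress_mult[OF G r \<Phi> ig g, symmetric]
      using G g one by (simp add: group.l_inv)
    ultimately show ?thesis
      unfolding unitary_mat_def using compress_carrier[OF r P g] by auto
  qed
  then show ?thesis unfolding unitary_rep_def using compress_mult[OF G r \<Phi>] by auto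
qed

lemma invariant_subspace_frame:
  assumes r: "unitary_rep G m \<rho>" and V: "is_subspace m V"
    and inv: "\<forall>g\<in>carrier G. \<forall>v\<in>V. \<rho> g *\<^sub>v v \<in> V"
  shows "\<exists>k \<Phi>. orthonormal_frame m V k \<Phi> \<and> invariant_isometry G m \<rho> V k \<Phi>"
proof -
  obtain k \<Phi> where F: "orthonormal_frame m V k \<Phi>" using orthonormal_frame_exists[OF V] by blast
  then have P: "\<Phi> \<in> carrier_mat m k" and rng: "\<forall>y\<in>carrier_vec k. \<Phi> *\<^sub>v y \<in> V"
    and proj: "\<forall>w\<in>V. \<Phi> *\<^sub>v (adj \<Phi> *\<^sub>v w) = w"
    unfolding orthonormal_frame_def isometry_mat_def by auto
  have "\<exists>z\<in>carrier_vec k. \<rho> g *\<^sub>v (\<Phi> *\<^sub>v y) = \<Phi> *\<^sub>v z" if g: "g \<in> carrier G" and y: "y \<in> carrier_vec k" for g y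
  proof
    show "\<rho> g *\<^sub>v (\<Phi> *\<^sub>v y) = \<Phi> *\<^sub>v (adj \<Phi> *\<^sub>v (\<rho> g *\<^sub>v (\<Phi> *\<^sub>v y)))" using proj inv g rng y by auto
    show "adj \<Phi> *\<^sub>v (\<rho> g *\<^sub>v (\<Phi> *\<^sub>v y)) \<in> carrier_vec k" using P unitary_rep_carrier[OF r g] y by auto
  qed
  then show ?thesis using F unfolding orthonormal_frame_def invariant_isometry_def by blast
qed

lemma invariant_isometry_mult:
  assumes r: "unitary_rep G m \<rho>" and \<Phi>: "invariant_isometry G m \<rho> V k \<Phi>"
    and \<Psi>: "invariant_isometry G k (compress \<Phi> \<rho>) W j \<Psi>"
  shows "invariant_isometry G m \<rho> V j (\<Phi> * \<Psi>)"
proof -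
  have P: "\<Phi> \<in> carrier_mat m k" and PP: "adj \<Phi> * \<Phi> = 1\<^sub>m k" and rngP: "\<forall>y\<in>carrier_vec k. \<Phi> *\<^sub>v y \<in> V"
    using \<Phi> unfolding invariant_isometry_def isometry_mat_def by auto
  have Q: "\<Psi> \<in> carrier_mat k j" and QQ: "adj \<Psi> * \<Psi> = 1\<^sub>m j"
    and invQ: "\<forall>g\<in>carrier G. \<forall>y\<in>carrier_vec j. \<exists>z\<in>carrier_vec j. compress \<Phi> \<rho> g *\<^sub>v (\<Psi> *\<^sub>v y) = \<Psi> *\<^sub>v z"
    using \<Psi> unfolding invariant_isometry_def isometry_mat_def by auto
  have "adj (\<Phi> * \<Psi>) * (\<Phi> * \<Psi>) = adj \<Psi> * ((adj \<Phi> * \<Phi>) * \<Psi>)"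
    using P Q by (simp add: adj_mult assoc_mult_mat[of _ j k _ m _ j] assoc_mult_mat[of _ k m _ k _ j])
  then have iso: "isometry_mat m j (\<Phi> * \<Psi>)" unfolding isometry_mat_def using P Q PP QQ by simp
  have "\<exists>z\<in>carrier_vec j. \<rho> g *\<^sub>v ((\<Phi> * \<Psi>) *\<^sub>v y) = (\<Phi> * \<Psi>) *\<^sub>v z"
    if g: "g \<in> carrier G" and y: "y \<in> carrier_vec j" for g y
  proof -
    obtain z where z: "z \<in> carrier_vec j" and e: "compress \<Phi> \<rho> g *\<^sub>v (\<Psi> *\<^sub>v y) = \<Psi> *\<^sub>v z"
      using invQ g y by blast
    have "\<rho> g *\<^sub>v ((\<Phi> * \<Psi>) *\<^sub>v y) = \<Phi> *\<^sub>v (compress \<Phi> \<rho> g *\<^sub>v (\<Psi> *\<^sub>v y))"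
      using invariant_isometry_mult_vec[OF r \<Phi> g, of "\<Psi> *\<^sub>v y"] P Q y by (simp add: assoc_mult_mat_vec)
    also have "\<dots> = (\<Phi> * \<Psi>) *\<^sub>v z" unfolding e using P Q z by (simp add: assoc_mult_mat_vec)
    finally show ?thesis using z by blast
  qed
  moreover have "\<forall>y\<in>carrier_vec j. (\<Phi> * \<Psi>) *\<^sub>v y \<in> V" using rngP P Q by (simp add: assoc_mult_mat_vec)
  ultimately show ?thesis using iso unfolding invariant_isometry_def by blast
qed

text \<open>A proper invariant subspace of the compression would yield a smaller invariant isometry.\<close>
lemma compress_irreducible:
  assumes G: "group G" and r: "unitary_rep G m \<rho>" and \<Phi>: "invariant_isometry G m \<rho> V k \<Phi>"
    and k: "0 < k" and minimal: "\<And>j \<Psi>. 0 < j \<Longrightarrow> j < k \<Longrightarrow> \<not> invariant_isometry G m \<rho> V j \<Psi>"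
  shows "irreducible_rep G k (compress \<Phi> \<rho>)"
proof -
  have \<sigma>: "unitary_rep G k (compress \<Phi> \<rho>)" using compress_unitary_rep[OF G r \<Phi>] .
  have "W = {0\<^sub>v k} \<or> W = carrier_vec k"
    if W: "is_subspace k W" and Winv: "\<forall>g\<in>carrier G. \<forall>v\<in>W. compress \<Phi> \<rho> g *\<^sub>v v \<in> W" for W
  proof (rule ccontr)
    assume nt: "\<not> (W = {0\<^sub>v k} \<or> W = carrier_vec k)"
    obtain j \<Psi> where F: "orthonormal_frame k W j \<Psi>" and \<Psi>: "invariant_isometry G k (compress \<Phi> \<rho>) W j \<Psi>"
      using invariant_subspace_frame[OF \<sigma> W Winv] by blast
    have "0 < j" using orthonormal_frame_dim_pos[OF F W] nt by auto
    moreover have "j < k"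
      using orthonormal_frame_dim_less[OF F] W nt unfolding is_subspace_def by auto
    ultimately show False using minimal invariant_isometry_mult[OF r \<Phi> \<Psi>] by blast
  qed
  then show ?thesis unfolding irreducible_rep_def using \<sigma> k by auto
qed

lemma isotypic_carrier: "isotypic G m \<rho> lam \<subseteq> carrier_vec m"
  unfolding isotypic_def by (rule span_in_carrier) auto

lemma intertwiner_mult_vec_in_isotypic:
  assumes "\<Phi> \<in> carrier_mat m (fst lam)" "v \<in> carrier_vec (fst lam)"
    "\<forall>g\<in>carrier G. \<rho> g * \<Phi> = \<Phi> * snd lam g"
  shows "\<Phi> *\<^sub>v v \<in> isotypic G m \<rho> lam"
  unfolding isotypic_def using assms by (intro subsetD[OF span_in_superset]) blast

lemma irreps_unitary_rep: "lam \<in> irreps G \<Longrightarrow> unitary_rep G (fst lam) (snd lam)"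
  unfolding irreps_def irreducible_rep_def by auto

lemma isotypic_invariant:
  assumes r: "unitary_rep G m \<rho>" and lam: "lam \<in> irreps G" and g: "g \<in> carrier G"
    and x: "x \<in> isotypic G m \<rho> lam"
  shows "\<rho> g *\<^sub>v x \<in> isotypic G m \<rho> lam"
  using x unfolding isotypic_def
proof (rule span_in_invariant)
  show "\<rho> g \<in> carrier_mat m m" using unitary_rep_carrier[OF r g] .
  fix y assume "y \<in> {\<Phi> *\<^sub>v v |\<Phi> v. \<Phi> \<in> carrier_mat m (fst lam) \<and> v \<in> carrier_vec (fst lam) \<and>
    (\<forall>g\<in>carrier G. \<rho> g * \<Phi> = \<Phi> * snd lam g)}"
  then obtain \<Phi> v where y: "y = \<Phi> *\<^sub>v v" and P: "\<Phi> \<in> carrier_mat m (fst lam)"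
    and v: "v \<in> carrier_vec (fst lam)" and i: "\<forall>g\<in>carrier G. \<rho> g * \<Phi> = \<Phi> * snd lam g" by blast
  have sc: "snd lam g \<in> carrier_mat (fst lam) (fst lam)"
    using unitary_rep_carrier[OF irreps_unitary_rep[OF lam] g] .
  have "\<rho> g *\<^sub>v y = (\<rho> g * \<Phi>) *\<^sub>v v"
    unfolding y using unitary_rep_carrier[OF r g] P v by (simp add: assoc_mult_mat_vec)
  also have "\<dots> = \<Phi> *\<^sub>v (snd lam g *\<^sub>v v)" using i g P v sc by (simp add: assoc_mult_mat_vec)
  finally show "\<rho> g *\<^sub>v y \<in> span_in m {\<Phi> *\<^sub>v v |\<Phi> v. \<Phi> \<in> carrier_mat m (fst lam) \<and>
    v \<in> carrier_vec (fst lam) \<and> (\<forall>g\<in>carrier G. \<rho> g * \<Phi> = \<Phi> * snd lam g)}"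
    using intertwiner_mult_vec_in_isotypic[OF P _ i] sc v unfolding isotypic_def by auto
qed auto

lemma minimal_invariant_isometry_exists:
  assumes r: "unitary_rep G m \<rho>" and V: "is_subspace m V"
    and inv: "\<forall>g\<in>carrier G. \<forall>v\<in>V. \<rho> g *\<^sub>v v \<in> V" and nz: "V \<noteq> {0\<^sub>v m}"
  shows "\<exists>k \<Phi>. 0 < k \<and> invariant_isometry G m \<rho> V k \<Phi> \<and>
    (\<forall>j \<Psi>. 0 < j \<and> j < k \<longrightarrow> \<not> invariant_isometry G m \<rho> V j \<Psi>)"
proof -
  let ?P = "\<lambda>k. 0 < k \<and> (\<exists>\<Phi>. invariant_isometry G m \<rho> V k \<Phi>)"
  obtain k0 \<Phi>0 where F0: "orthonormal_frame m V k0 \<Phi>0" and I0: "invariant_isometry G m \<rho> V k0 \<Phi>0"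
    using invariant_subspace_frame[OF r V inv] by blast
  have "?P k0" using orthonormal_frame_dim_pos[OF F0 V nz] I0 by blast
  define k where "k = (LEAST k. ?P k)"
  have "?P k" unfolding k_def by (rule LeastI[of ?P, OF \<open>?P k0\<close>])
  moreover have "\<not> invariant_isometry G m \<rho> V j \<Psi>" if "0 < j" "j < k" for j \<Psi>
    using not_less_Least[of j ?P] that unfolding k_def by blast
  ultimately show ?thesis by blast
qed

lemma invariant_subspace_meets_isotypic:
  assumes G: "group G" and r: "unitary_rep G m \<rho>" and V: "is_subspace m V"
    and inv: "\<forall>g\<in>carrier G. \<forall>v\<in>V. \<rho> g *\<^sub>v v \<in> V" and nz: "V \<noteq> {0\<^sub>v m}"
  shows "\<exists>lam\<in>irreps G. \<exists>v\<in>V. v \<noteq> 0\<^sub>v m \<and> v \<in> isotypic G m \<rho> lam"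
proof -
  obtain k \<Phi> where k: "0 < k" and \<Phi>: "invariant_isometry G m \<rho> V k \<Phi>"
    and minimal: "\<forall>j \<Psi>. 0 < j \<and> j < k \<longrightarrow> \<not> invariant_isometry G m \<rho> V j \<Psi>"
    using minimal_invariant_isometry_exists[OF r V inv nz] by blast
  have "irreducible_rep G k (compress \<Phi> \<rho>)"
    using minimal by (intro compress_irreducible[OF G r \<Phi> k]) blast
  then have "(k, compress \<Phi> \<rho>) \<in> irreps G" unfolding irreps_def by simp
  moreover
  have iso: "isometry_mat m k \<Phi>" and rng: "\<forall>y\<in>carrier_vec k. \<Phi> *\<^sub>v y \<in> V"
    using \<Phi> unfolding invariant_isometry_def by auto
  then have P: "\<Phi> \<in> carrier_mat m k" unfolding isometry_mat_def by auto
  define v where "v = \<Phi> *\<^sub>v unit_vec k 0"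
  have "v \<in> isotypic G m \<rho> (k, compress \<Phi> \<rho>)"
    unfolding v_def using P invariant_isometry_intertwines[OF r \<Phi>]
    by (intro intertwiner_mult_vec_in_isotypic) auto
  moreover have "v \<in> V" unfolding v_def using rng by auto
  moreover have "v \<noteq> 0\<^sub>v m"
  proof
    assume "v = 0\<^sub>v m"
    then have "unit_vec k 0 = adj \<Phi> *\<^sub>v 0\<^sub>v m"
      using isometry_mat_adj_mult_vec[OF iso, of "unit_vec k 0"] unfolding v_def by simp
    also have "\<dots> = 0\<^sub>v k" using mult_mat_zero_vec[OF adj_carrier[OF P]] .
    finally have "unit_vec k 0 $ 0 = (0\<^sub>v k :: complex vec) $ 0" by simp
    then show False using k by simp
  qed
  ultimately show ?thesis by blast
qed

definition orth_compl :: "nat \<Rightarrow> complex vec set \<Rightarrow> complex vec set" where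
  "orth_compl d S = {x \<in> carrier_vec d. \<forall>s\<in>S. cinner x s = 0}"

lemma is_subspace_orth_compl: "is_subspace d (orth_compl d S)"
  unfolding is_subspace_def orth_compl_def by (auto simp: cinner_add cinner_smult cinner_zero)

lemma orth_compl_invariant:
  assumes G: "group G" and r: "unitary_rep G m \<rho>" and S: "S \<subseteq> carrier_vec m"
    and inv: "\<forall>g\<in>carrier G. \<forall>s\<in>S. \<rho> g *\<^sub>v s \<in> S"
    and g: "g \<in> carrier G" and x: "x \<in> orth_compl m S"
  shows "\<rho> g *\<^sub>v x \<in> orth_compl m S"
proof -
  have xc: "x \<in> carrier_vec m" using x unfolding orth_compl_def by auto
  have rg: "\<rho> g \<in> carrier_mat m m" using unitary_rep_carrier[OF r g] .
  have ig: "inv\<^bsub>G\<^esub> g \<in> carrier G" using G g by (simp add: group.inv_closed)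
  have "cinner (\<rho> g *\<^sub>v x) s = 0" if s: "s \<in> S" for s
  proof -
    have "cinner (\<rho> g *\<^sub>v x) s = cinner x (adj (\<rho> g) *\<^sub>v s)"
      using cinner_adj'[OF rg xc subsetD[OF S s]] .
    also have "adj (\<rho> g) *\<^sub>v s = \<rho> (inv\<^bsub>G\<^esub> g) *\<^sub>v s" using unitary_rep_inv[OF G r g] by simp
    finally have eq: "cinner (\<rho> g *\<^sub>v x) s = cinner x (\<rho> (inv\<^bsub>G\<^esub> g) *\<^sub>v s)" .
    have "\<rho> (inv\<^bsub>G\<^esub> g) *\<^sub>v s \<in> S" using inv ig s by blast
    then show ?thesis using x eq unfolding orth_compl_def by simp
  qed
  then show ?thesis unfolding orth_compl_def using rg xc by simp
qed

lemma orthonormal_frame_residual: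
  assumes F: "orthonormal_frame d S k \<Phi>" and S: "S \<subseteq> carrier_vec d" and x: "x \<in> carrier_vec d"
  shows "x - \<Phi> *\<^sub>v (adj \<Phi> *\<^sub>v x) \<in> orth_compl d S"
proof -
  have \<Phi>: "isometry_mat d k \<Phi>" and proj: "\<forall>w\<in>S. \<Phi> *\<^sub>v (adj \<Phi> *\<^sub>v w) = w"
    using F unfolding orthonormal_frame_def by auto
  have P: "\<Phi> \<in> carrier_mat d k" using \<Phi> unfolding isometry_mat_def by auto
  define r where "r = x - \<Phi> *\<^sub>v (adj \<Phi> *\<^sub>v x)"
  have rc: "r \<in> carrier_vec d" unfolding r_def using x P by auto
  have "cinner r s = 0" if s: "s \<in> S" for s
  proof -
    have "cinner r s = cinner r (\<Phi> *\<^sub>v (adj \<Phi> *\<^sub>v s))" using proj s by simp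
    also have "\<dots> = cinner (adj \<Phi> *\<^sub>v r) (adj \<Phi> *\<^sub>v s)" using cinner_adj[OF P rc] P S s by auto
    also have "\<dots> = 0" using isometry_mat_residual[OF \<Phi> x] cinner_zero unfolding r_def by simp
    finally show ?thesis .
  qed
  then show ?thesis using rc unfolding orth_compl_def r_def by auto
qed

lemma span_isotypic_invariant:
  assumes r: "unitary_rep G m \<rho>" and g: "g \<in> carrier G"
    and x: "x \<in> span_in m (\<Union>lam\<in>irreps G. isotypic G m \<rho> lam)"
  shows "\<rho> g *\<^sub>v x \<in> span_in m (\<Union>lam\<in>irreps G. isotypic G m \<rho> lam)"
proof (rule span_in_invariant[OF x _ unitary_rep_carrier[OF r g]])
  show "(\<Union>lam\<in>irreps G. isotypic G m \<rho> lam) \<subseteq> carrier_vec m" using isotypic_carrier by blast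
  fix y assume "y \<in> (\<Union>lam\<in>irreps G. isotypic G m \<rho> lam)"
  then obtain lam where lam: "lam \<in> irreps G" and y: "y \<in> isotypic G m \<rho> lam" by blast
  have "\<rho> g *\<^sub>v y \<in> (\<Union>lam\<in>irreps G. isotypic G m \<rho> lam)" using isotypic_invariant[OF r lam g y] lam by blast
  then show "\<rho> g *\<^sub>v y \<in> span_in m (\<Union>lam\<in>irreps G. isotypic G m \<rho> lam)" using span_in_superset by blast
qed

lemma carrier_vec_subset_span_isotypic:
  assumes G: "group G" and r: "unitary_rep G m \<rho>"
  shows "carrier_vec m \<subseteq> span_in m (\<Union>lam\<in>irreps G. isotypic G m \<rho> lam)"
proof
  define S where "S = span_in m (\<Union>lam\<in>irreps G. isotypic G m \<rho> lam)"
  have U: "(\<Union>lam\<in>irreps G. isotypic G m \<rho> lam) \<subseteq> carrier_vec m" using isotypic_carrier by blast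
  have S: "is_subspace m S" and Sc: "S \<subseteq> carrier_vec m"
    unfolding S_def using is_subspace_span_in[OF U] span_in_carrier[OF U] by auto
  have "\<forall>g\<in>carrier G. \<forall>s\<in>S. \<rho> g *\<^sub>v s \<in> S"
    unfolding S_def using span_isotypic_invariant[OF r] by blast
  then have inv: "\<forall>g\<in>carrier G. \<forall>v\<in>orth_compl m S. \<rho> g *\<^sub>v v \<in> orth_compl m S"
    using orth_compl_invariant[OF G r Sc] by blast
  have "orth_compl m S = {0\<^sub>v m}"
  proof (rule ccontr)
    assume "orth_compl m S \<noteq> {0\<^sub>v m}"
    then obtain lam v where "lam \<in> irreps G" "v \<in> isotypic G m \<rho> lam"
      and v: "v \<in> orth_compl m S" "v \<noteq> 0\<^sub>v m"
      using invariant_subspace_meets_isotypic[OF G r is_subspace_orth_compl inv] by blast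
    then have "v \<in> S" unfolding S_def using span_in_superset by blast
    then have "cinner v v = 0" using v(1) unfolding orth_compl_def by auto
    then show False using cinner_self_eq_0 v unfolding orth_compl_def by blast
  qed
  fix x :: "complex vec" assume x: "x \<in> carrier_vec m"
  obtain k \<Phi> where F: "orthonormal_frame m S k \<Phi>" using orthonormal_frame_exists[OF S] by blast
  have P: "\<Phi> \<in> carrier_mat m k" using F unfolding orthonormal_frame_def isometry_mat_def by auto
  have "x - \<Phi> *\<^sub>v (adj \<Phi> *\<^sub>v x) = 0\<^sub>v m"
    using orthonormal_frame_residual[OF F Sc x] \<open>orth_compl m S = {0\<^sub>v m}\<close> by blast
  then have "x = \<Phi> *\<^sub>v (adj \<Phi> *\<^sub>v x)"
    using eq_if_minus_vec_eq_0[of x m "\<Phi> *\<^sub>v (adj \<Phi> *\<^sub>v x)"] x P by auto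
  moreover have "\<Phi> *\<^sub>v (adj \<Phi> *\<^sub>v x) \<in> S" using F x P unfolding orthonormal_frame_def by simp
  ultimately show "x \<in> span_in m (\<Union>lam\<in>irreps G. isotypic G m \<rho> lam)" unfolding S_def by simp
qed

lemma rep_alg_carrier[simp]: "rep_alg G d \<rho> z \<in> carrier_mat d d"
  unfolding rep_alg_def by auto

lemma rep_alg_intertwines:
  assumes P: "\<Phi> \<in> carrier_mat m d" and rc: "\<forall>g\<in>carrier G. \<rho> g \<in> carrier_mat m m"
    and sc: "\<forall>g\<in>carrier G. \<sigma> g \<in> carrier_mat d d" and i: "\<forall>g\<in>carrier G. \<rho> g * \<Phi> = \<Phi> * \<sigma> g"
  shows "rep_alg G m \<rho> z * \<Phi> = \<Phi> * rep_alg G d \<sigma> z"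
proof (rule eq_matI)
  fix i j assume "i < dim_row (\<Phi> * rep_alg G d \<sigma> z)" "j < dim_col (\<Phi> * rep_alg G d \<sigma> z)"
  then have i': "i < m" and j: "j < d" using P rep_alg_carrier[of G d \<sigma> z] by auto
  have "(rep_alg G m \<rho> z * \<Phi>) $$ (i,j) = (\<Sum>l<m. (\<Sum>g\<in>carrier G. z g * \<rho> g $$ (i,l)) * \<Phi> $$ (l,j))"
    using i' j P by (auto simp: rep_alg_def scalar_prod_def atLeast0LessThan row_def col_def intro!: sum.cong)
  also have "\<dots> = (\<Sum>g\<in>carrier G. z g * (\<Sum>l<m. \<rho> g $$ (i,l) * \<Phi> $$ (l,j)))"
    by (simp add: sum_distrib_left sum_distrib_right mult.assoc sum.swap[of _ "{..<m}"])
  also have "\<dots> = (\<Sum>g\<in>carrier G. z g * (\<rho> g * \<Phi>) $$ (i,j))"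
    using i' j P rc by (auto simp: scalar_prod_def atLeast0LessThan row_def col_def intro!: sum.cong)
  also have "\<dots> = (\<Sum>g\<in>carrier G. z g * (\<Phi> * \<sigma> g) $$ (i,j))"
    using i by (intro sum.cong) auto
  also have "\<dots> = (\<Sum>g\<in>carrier G. z g * (\<Sum>l<d. \<Phi> $$ (i,l) * \<sigma> g $$ (l,j)))"
    using i' j P sc by (auto simp: scalar_prod_def atLeast0LessThan row_def col_def intro!: sum.cong)
  also have "\<dots> = (\<Sum>l<d. \<Phi> $$ (i,l) * (\<Sum>g\<in>carrier G. z g * \<sigma> g $$ (l,j)))"
    by (simp add: sum_distrib_left mult_ac sum.swap[of _ "carrier G"])
  also have "\<dots> = (\<Phi> * rep_alg G d \<sigma> z) $$ (i,j)"
    using i' j P by (auto simp: rep_alg_def scalar_prod_def atLeast0LessThan row_def col_def intro!: sum.cong)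
  finally show "(rep_alg G m \<rho> z * \<Phi>) $$ (i,j) = (\<Phi> * rep_alg G d \<sigma> z) $$ (i,j)" .
qed (use P in \<open>auto simp: rep_alg_def\<close>)

lemma rep_alg_on_isotypic:
  assumes r: "unitary_rep G m \<rho>" and lam: "lam \<in> irreps G"
    and scalar: "rep_alg G (fst lam) (snd lam) z = c \<cdot>\<^sub>m 1\<^sub>m (fst lam)"
    and v: "v \<in> isotypic G m \<rho> lam"
  shows "rep_alg G m \<rho> z *\<^sub>v v = c \<cdot>\<^sub>v v"
proof -
  have "isotypic G m \<rho> lam \<subseteq> {x \<in> carrier_vec m. rep_alg G m \<rho> z *\<^sub>v x = c \<cdot>\<^sub>v x}"
    unfolding isotypic_def
  proof (rule span_in_least[OF is_subspace_eigenspace[OF rep_alg_carrier]], rule subsetI)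
    fix x assume "x \<in> {\<Phi> *\<^sub>v v |\<Phi> v. \<Phi> \<in> carrier_mat m (fst lam) \<and> v \<in> carrier_vec (fst lam) \<and>
      (\<forall>g\<in>carrier G. \<rho> g * \<Phi> = \<Phi> * snd lam g)}"
    then obtain \<Phi> v where x: "x = \<Phi> *\<^sub>v v" and P: "\<Phi> \<in> carrier_mat m (fst lam)"
      and v: "v \<in> carrier_vec (fst lam)" and i: "\<forall>g\<in>carrier G. \<rho> g * \<Phi> = \<Phi> * snd lam g" by blast
    have e: "rep_alg G m \<rho> z * \<Phi> = \<Phi> * rep_alg G (fst lam) (snd lam) z"
      using unitary_rep_carrier[OF r] unitary_rep_carrier[OF irreps_unitary_rep[OF lam]] P i
      by (intro rep_alg_intertwines) auto
    have "rep_alg G m \<rho> z *\<^sub>v x = (rep_alg G m \<rho> z * \<Phi>) *\<^sub>v v"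
      unfolding x using P v by (simp add: assoc_mult_mat_vec[of _ m m _ "fst lam"])
    also have "\<dots> = \<Phi> *\<^sub>v (c \<cdot>\<^sub>v v)" unfolding e scalar using P v
      by (simp add: assoc_mult_mat_vec[of _ m "fst lam" _ "fst lam"] smult_one_mat_mult_vec)
    also have "\<dots> = c \<cdot>\<^sub>v x" unfolding x using P v by (rule mult_mat_vec)
    finally show "x \<in> {x \<in> carrier_vec m. rep_alg G m \<rho> z *\<^sub>v x = c \<cdot>\<^sub>v x}" using x P v by auto
  qed
  then show ?thesis using v by auto
qed

lemma isotypic_subset_if_equiv_rep:
  assumes r: "unitary_rep G n \<rho>" and lam: "lam \<in> irreps G" and mu: "mu \<in> irreps G"
    and eq: "equiv_rep G lam mu"
  shows "isotypic G n \<rho> mu \<subseteq> isotypic G n \<rho> lam"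
proof -
  obtain P Q where d: "fst lam = fst mu" and Pc: "P \<in> carrier_mat (fst lam) (fst lam)"
    and Qc: "Q \<in> carrier_mat (fst lam) (fst lam)" and PQ: "P * Q = 1\<^sub>m (fst lam)"
    and i: "\<forall>g\<in>carrier G. P * snd lam g = snd mu g * P"
    using eq unfolding equiv_rep_def by blast
  let ?d = "fst lam"
  show ?thesis unfolding isotypic_def[of _ _ _ mu]
  proof (rule span_in_least[rotated], rule subsetI)
    fix x assume "x \<in> {\<Phi> *\<^sub>v v |\<Phi> v. \<Phi> \<in> carrier_mat n (fst mu) \<and> v \<in> carrier_vec (fst mu) \<and>
      (\<forall>g\<in>carrier G. \<rho> g * \<Phi> = \<Phi> * snd mu g)}"
    then obtain \<Phi> v where x: "x = \<Phi> *\<^sub>v v" and Ph: "\<Phi> \<in> carrier_mat n ?d" and v: "v \<in> carrier_vec ?d"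
      and j: "\<forall>g\<in>carrier G. \<rho> g * \<Phi> = \<Phi> * snd mu g" using d by auto
    have x': "x = (\<Phi> * P) *\<^sub>v (Q *\<^sub>v v)"
    proof -
      have "P *\<^sub>v (Q *\<^sub>v v) = v" using Pc Qc v PQ by (subst assoc_mult_mat_vec[symmetric]) auto
      then show ?thesis unfolding x using Ph Pc Qc v by (simp add: assoc_mult_mat_vec)
    qed
    have "\<rho> g * (\<Phi> * P) = (\<Phi> * P) * snd lam g" if g: "g \<in> carrier G" for g
    proof -
      have sl: "snd lam g \<in> carrier_mat ?d ?d" using unitary_rep_carrier[OF irreps_unitary_rep[OF lam] g] .
      have sm: "snd mu g \<in> carrier_mat ?d ?d"
        using unitary_rep_carrier[OF irreps_unitary_rep[OF mu] g] d by simp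
      have rg: "\<rho> g \<in> carrier_mat n n" using unitary_rep_carrier[OF r g] .
      have "\<rho> g * (\<Phi> * P) = (\<rho> g * \<Phi>) * P" using rg Ph Pc by (simp add: assoc_mult_mat[of _ n n _ ?d _ ?d])
      also have "\<dots> = \<Phi> * (snd mu g * P)" using j g Ph sm Pc by (simp add: assoc_mult_mat[of _ n ?d _ ?d _ ?d])
      also have "\<dots> = \<Phi> * (P * snd lam g)" using i g by simp
      also have "\<dots> = (\<Phi> * P) * snd lam g" using Ph Pc sl by (simp add: assoc_mult_mat[of _ n ?d _ ?d _ ?d])
      finally show ?thesis .
    qed
    then show "x \<in> isotypic G n \<rho> lam"
      unfolding x' using Ph Pc Qc v by (intro intertwiner_mult_vec_in_isotypic) auto
  qed (unfold isotypic_def, rule is_subspace_span_in, auto)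
qed

section \<open>Kernels of operators with a spanning set of eigenvectors\<close>

text \<open>It fixes \<open>ker K\<close> and annihilates every
  eigenvector whose eigenvalue occurs in \<open>cs\<close>; a factor with \<open>c = 0\<close> is the identity since \<open>1/0 = 0\<close>.\<close>
definition eigen_filter :: "complex mat \<Rightarrow> complex list \<Rightarrow> complex vec \<Rightarrow> complex vec" where
  "eigen_filter K cs x = foldr (\<lambda>c y. y - (1/c) \<cdot>\<^sub>v (K *\<^sub>v y)) cs x"

lemma eigen_filter_Nil[simp]: "eigen_filter K [] x = x"
  unfolding eigen_filter_def by simp

lemma eigen_filter_Cons:
  "eigen_filter K (c # cs) x = eigen_filter K cs x - (1/c) \<cdot>\<^sub>v (K *\<^sub>v eigen_filter K cs x)"
  unfolding eigen_filter_def by simp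

lemma eigen_filter_carrier:
  "K \<in> carrier_mat d d \<Longrightarrow> x \<in> carrier_vec d \<Longrightarrow> eigen_filter K cs x \<in> carrier_vec d"
  by (induction cs) (auto simp: eigen_filter_Cons)

lemma eigen_filter_add:
  assumes K: "K \<in> carrier_mat d d" and x: "x \<in> carrier_vec d" and y: "y \<in> carrier_vec d"
  shows "eigen_filter K cs (x + y) = eigen_filter K cs x + eigen_filter K cs y"
proof (induction cs)
  case (Cons c cs)
  define a where "a = eigen_filter K cs x"
  define b where "b = eigen_filter K cs y"
  have a: "a \<in> carrier_vec d" and b: "b \<in> carrier_vec d"
    unfolding a_def b_def using eigen_filter_carrier K x y by auto
  have "eigen_filter K (c # cs) (x + y) = (a + b) - (1/c) \<cdot>\<^sub>v (K *\<^sub>v (a + b))"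
    unfolding eigen_filter_Cons Cons a_def b_def ..
  also have "K *\<^sub>v (a + b) = K *\<^sub>v a + K *\<^sub>v b" using K a b by (rule mult_add_distrib_mat_vec)
  also have "(a + b) - (1/c) \<cdot>\<^sub>v (K *\<^sub>v a + K *\<^sub>v b) = (a - (1/c) \<cdot>\<^sub>v (K *\<^sub>v a)) + (b - (1/c) \<cdot>\<^sub>v (K *\<^sub>v b))"
    using K a b by (intro eq_vecI) (auto simp: algebra_simps)
  finally show ?case unfolding eigen_filter_Cons a_def b_def .
qed simp

lemma eigen_filter_smult:
  assumes K: "K \<in> carrier_mat d d" and x: "x \<in> carrier_vec d"
  shows "eigen_filter K cs (s \<cdot>\<^sub>v x) = s \<cdot>\<^sub>v eigen_filter K cs x"
proof (induction cs)
  case (Cons c cs)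
  define a where "a = eigen_filter K cs x"
  have a: "a \<in> carrier_vec d" unfolding a_def using eigen_filter_carrier K x by auto
  have "eigen_filter K (c # cs) (s \<cdot>\<^sub>v x) = s \<cdot>\<^sub>v a - (1/c) \<cdot>\<^sub>v (K *\<^sub>v (s \<cdot>\<^sub>v a))"
    unfolding eigen_filter_Cons Cons a_def ..
  also have "K *\<^sub>v (s \<cdot>\<^sub>v a) = s \<cdot>\<^sub>v (K *\<^sub>v a)" using K a by (rule mult_mat_vec)
  also have "s \<cdot>\<^sub>v a - (1/c) \<cdot>\<^sub>v (s \<cdot>\<^sub>v (K *\<^sub>v a)) = s \<cdot>\<^sub>v (a - (1/c) \<cdot>\<^sub>v (K *\<^sub>v a))"
    using K a by (intro eq_vecI) (auto simp: algebra_simps)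
  finally show ?case unfolding eigen_filter_Cons a_def .
qed simp

lemma eigen_filter_eigenvector:
  assumes K: "K \<in> carrier_mat d d" and x: "x \<in> carrier_vec d" and e: "K *\<^sub>v x = e \<cdot>\<^sub>v x"
  shows "eigen_filter K cs x = (\<Prod>c\<leftarrow>cs. 1 - e / c) \<cdot>\<^sub>v x"
proof (induction cs)
  case (Cons c cs)
  define p where "p = (\<Prod>c\<leftarrow>cs. 1 - e / c)"
  have "eigen_filter K (c # cs) x = p \<cdot>\<^sub>v x - (1/c) \<cdot>\<^sub>v (p \<cdot>\<^sub>v (e \<cdot>\<^sub>v x))"
    unfolding eigen_filter_Cons Cons p_def using mult_mat_vec[OF K x] e by simp
  also have "\<dots> = ((1 - e/c) * p) \<cdot>\<^sub>v x"
    using x by (intro eq_vecI) (auto simp: algebra_simps)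
  finally show ?case unfolding p_def by simp
qed simp

lemma eigen_filter_ker:
  assumes K: "K \<in> carrier_mat d d" and x: "x \<in> ker_mat d K"
  shows "eigen_filter K cs x = x"
proof -
  have xc: "x \<in> carrier_vec d" and "K *\<^sub>v x = 0 \<cdot>\<^sub>v x" using x unfolding ker_mat_def by auto
  then have "eigen_filter K cs x = (\<Prod>c\<leftarrow>cs. 1 - 0 / c) \<cdot>\<^sub>v x"
    by (rule eigen_filter_eigenvector[OF K])
  also have "(\<Prod>c\<leftarrow>cs. 1 - 0 / c) = (1 :: complex)" by (induction cs) auto
  finally show ?thesis using xc by simp
qed

text \<open>Asking this for every list containing \<open>ds\<close>, not just for \<open>ds\<close>, makes the set closed under
  addition without assuming that \<open>W\<close> is \<open>K\<close>-invariant.\<close>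
definition filtered_into :: "nat \<Rightarrow> complex mat \<Rightarrow> complex vec set \<Rightarrow> complex vec set" where
  "filtered_into d K W =
     {x \<in> carrier_vec d. \<exists>ds. \<forall>cs. set ds \<subseteq> set cs \<longrightarrow> eigen_filter K cs x \<in> W}"

lemma is_subspace_filtered_into:
  assumes K: "K \<in> carrier_mat d d" and W: "is_subspace d W"
  shows "is_subspace d (filtered_into d K W)"
  unfolding is_subspace_def
proof (intro conjI ballI allI)
  show "filtered_into d K W \<subseteq> carrier_vec d" unfolding filtered_into_def by auto
  have "0\<^sub>v d \<in> ker_mat d K" using subspace_zero[OF is_subspace_ker_mat[OF K]] .
  then have "eigen_filter K cs (0\<^sub>v d) \<in> W" for cs using eigen_filter_ker[OF K] subspace_zero[OF W] by simp
  then show "0\<^sub>v d \<in> filtered_into d K W" unfolding filtered_into_def by auto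
next
  fix x y assume "x \<in> filtered_into d K W" "y \<in> filtered_into d K W"
  then obtain ds1 ds2 where x: "x \<in> carrier_vec d" "\<forall>cs. set ds1 \<subseteq> set cs \<longrightarrow> eigen_filter K cs x \<in> W"
    and y: "y \<in> carrier_vec d" "\<forall>cs. set ds2 \<subseteq> set cs \<longrightarrow> eigen_filter K cs y \<in> W"
    unfolding filtered_into_def by blast
  have "eigen_filter K cs (x + y) \<in> W" if "set (ds1 @ ds2) \<subseteq> set cs" for cs
  proof -
    have "eigen_filter K cs x \<in> W" "eigen_filter K cs y \<in> W" using x(2) y(2) that by auto
    then show ?thesis unfolding eigen_filter_add[OF K x(1) y(1)] by (rule subspace_add[OF W])
  qed
  then have "\<exists>ds. \<forall>cs. set ds \<subseteq> set cs \<longrightarrow> eigen_filter K cs (x + y) \<in> W" by blast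
  then show "x + y \<in> filtered_into d K W" unfolding filtered_into_def using x(1) y(1) by simp
next
  fix c x assume "x \<in> filtered_into d K W"
  then obtain ds where x: "x \<in> carrier_vec d" "\<forall>cs. set ds \<subseteq> set cs \<longrightarrow> eigen_filter K cs x \<in> W"
    unfolding filtered_into_def by blast
  have "eigen_filter K cs (c \<cdot>\<^sub>v x) \<in> W" if "set ds \<subseteq> set cs" for cs
    unfolding eigen_filter_smult[OF K x(1)] using x(2) that by (blast intro: subspace_smult[OF W])
  then have "\<exists>ds. \<forall>cs. set ds \<subseteq> set cs \<longrightarrow> eigen_filter K cs (c \<cdot>\<^sub>v x) \<in> W" by blast
  then show "c \<cdot>\<^sub>v x \<in> filtered_into d K W" unfolding filtered_into_def using x(1) by simp
qed

lemma ker_mat_subset_if_eigenvectors_span: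
  assumes K: "K \<in> carrier_mat d d" and W: "is_subspace d W" and S: "S \<subseteq> carrier_vec d"
    and spans: "carrier_vec d \<subseteq> span_in d S"
    and eig: "\<And>s. s \<in> S \<Longrightarrow> \<exists>e. K *\<^sub>v s = e \<cdot>\<^sub>v s \<and> (e = 0 \<longrightarrow> s \<in> W)"
  shows "ker_mat d K \<subseteq> W"
proof
  have "S \<subseteq> filtered_into d K W"
  proof
    fix s assume s: "s \<in> S"
    then obtain e where e: "K *\<^sub>v s = e \<cdot>\<^sub>v s" and e0: "e = 0 \<longrightarrow> s \<in> W" using eig by blast
    have sc: "s \<in> carrier_vec d" using s S by auto
    show "s \<in> filtered_into d K W"
    proof (cases "e = 0")
      case True
      then have "s \<in> ker_mat d K" using e sc unfolding ker_mat_def by auto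
      then have "eigen_filter K cs s \<in> W" for cs using eigen_filter_ker[OF K] e0 True by simp
      then show ?thesis unfolding filtered_into_def using sc by blast
    next
      case False
      have "eigen_filter K cs s \<in> W" if "e \<in> set cs" for cs
      proof -
        have zero: "(\<Prod>c\<leftarrow>cs. 1 - e / c) = 0" using that False by (induction cs) auto
        show ?thesis unfolding eigen_filter_eigenvector[OF K sc e] zero using subspace_zero[OF W] sc by simp
      qed
      then show ?thesis unfolding filtered_into_def using sc by (intro CollectI conjI exI[of _ "[e]"]) auto
    qed
  qed
  then have carrier: "carrier_vec d \<subseteq> filtered_into d K W"
    using spans span_in_least[OF is_subspace_filtered_into[OF K W]] by blast
  fix x assume x: "x \<in> ker_mat d K"
  then have "x \<in> filtered_into d K W" using carrier unfolding ker_mat_def by blast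
  then obtain ds where "\<forall>cs. set ds \<subseteq> set cs \<longrightarrow> eigen_filter K cs x \<in> W"
    unfolding filtered_into_def by blast
  then have "eigen_filter K ds x \<in> W" by blast
  then show "x \<in> W" using eigen_filter_ker[OF K x] by simp
qed

section \<open>The operator \<open>T\<^sub>A \<otimes> I - I \<otimes> T\<^sub>B\<close>\<close>

lemma kron_diff_carrier:
  "TB \<in> carrier_mat n n \<Longrightarrow> kron TA (1\<^sub>m n) - kron (1\<^sub>m m) TB \<in> carrier_mat (m*n) (m*n)"
  by (rule minus_carrier_mat) (rule kron_carrier_mat[OF one_carrier_mat])

lemma kron_diff_commute:
  assumes TA: "TA \<in> carrier_mat m m" and TB: "TB \<in> carrier_mat n n"
    and A: "A \<in> carrier_mat m m" and B: "B \<in> carrier_mat n n"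
    and cA: "TA * A = A * TA" and cB: "TB * B = B * TB"
  shows "(kron TA (1\<^sub>m n) - kron (1\<^sub>m m) TB) * kron A B = kron A B * (kron TA (1\<^sub>m n) - kron (1\<^sub>m m) TB)"
proof -
  have c1: "kron TA (1\<^sub>m n) \<in> carrier_mat (m*n) (m*n)" using TA by auto
  have c2: "kron (1\<^sub>m m) TB \<in> carrier_mat (m*n) (m*n)" using TB by auto
  have c3: "kron A B \<in> carrier_mat (m*n) (m*n)" using A B by auto
  have "(kron TA (1\<^sub>m n) - kron (1\<^sub>m m) TB) * kron A B = kron TA (1\<^sub>m n) * kron A B - kron (1\<^sub>m m) TB * kron A B"
    using c1 c2 c3 by (rule minus_mult_distrib_mat)
  also have "\<dots> = kron (TA * A) (1\<^sub>m n * B) - kron (1\<^sub>m m * A) (TB * B)"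
    using TA TB A B by (simp add: kron_mult_kron[of _ m m _ n n _ m _ n])
  also have "\<dots> = kron (A * TA) (B * 1\<^sub>m n) - kron (A * 1\<^sub>m m) (B * TB)"
    using A B cA cB by simp
  also have "\<dots> = kron A B * kron TA (1\<^sub>m n) - kron A B * kron (1\<^sub>m m) TB"
    using TA TB A B by (simp add: kron_mult_kron[of _ m m _ n n _ m _ n])
  also have "\<dots> = kron A B * (kron TA (1\<^sub>m n) - kron (1\<^sub>m m) TB)"
    using c3 c1 c2 by (rule mult_minus_distrib_mat[symmetric])
  finally show ?thesis .
qed

lemma kron_diff_mult_kron_vec:
  assumes TA: "TA \<in> carrier_mat m m" and TB: "TB \<in> carrier_mat n n"
    and u: "u \<in> carrier_vec m" and v: "v \<in> carrier_vec n"
    and eu: "TA *\<^sub>v u = a \<cdot>\<^sub>v u" and ev: "TB *\<^sub>v v = b \<cdot>\<^sub>v v"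
  shows "(kron TA (1\<^sub>m n) - kron (1\<^sub>m m) TB) *\<^sub>v kron_vec u v = (a - b) \<cdot>\<^sub>v kron_vec u v"
proof -
  have "(kron TA (1\<^sub>m n) - kron (1\<^sub>m m) TB) *\<^sub>v kron_vec u v
      = kron TA (1\<^sub>m n) *\<^sub>v kron_vec u v - kron (1\<^sub>m m) TB *\<^sub>v kron_vec u v"
    using TA TB u v by (intro minus_mult_distrib_mat_vec[of _ "m*n" "m*n"]) auto
  also have "\<dots> = kron_vec (a \<cdot>\<^sub>v u) v - kron_vec u (b \<cdot>\<^sub>v v)"
    using TA TB u v by (simp add: kron_mult_kron_vec[of _ m m _ n n] eu ev)
  also have "\<dots> = (a - b) \<cdot>\<^sub>v kron_vec u v"
  proof (rule eq_vecI)
    fix i assume "i < dim_vec ((a - b) \<cdot>\<^sub>v kron_vec u v)"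
    then have i: "i < m * n" using u v by (simp add: kron_vec_def)
    then show "(kron_vec (a \<cdot>\<^sub>v u) v - kron_vec u (b \<cdot>\<^sub>v v)) $ i = ((a - b) \<cdot>\<^sub>v kron_vec u v) $ i"
      using u v div_mod_less[OF i] by (simp add: kron_vec_def algebra_simps)
  qed (use u v in \<open>simp add: kron_vec_def\<close>)
  finally show ?thesis .
qed

lemma tensor_sub_carrier:
  "S \<subseteq> carrier_vec m \<Longrightarrow> T \<subseteq> carrier_vec n \<Longrightarrow> tensor_sub m n S T \<subseteq> carrier_vec (m*n)"
  unfolding tensor_sub_def by (rule span_in_carrier) (blast intro: kron_vec_carrier)

lemma is_subspace_diag_isotypic: "is_subspace (m*n) (diag_isotypic G m \<rho>A n \<rho>B)"
  unfolding diag_isotypic_def using tensor_sub_carrier[OF isotypic_carrier isotypic_carrier]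
  by (intro is_subspace_span_in) blast

lemma kron_vec_in_diag_isotypic:
  assumes lam: "lam \<in> irreps G" and u: "u \<in> isotypic G m \<rho>A lam" and v: "v \<in> isotypic G n \<rho>B lam"
  shows "kron_vec u v \<in> diag_isotypic G m \<rho>A n \<rho>B"
proof -
  have "kron_vec u v \<in> tensor_sub m n (isotypic G m \<rho>A lam) (isotypic G n \<rho>B lam)"
    unfolding tensor_sub_def using u v by (intro subsetD[OF span_in_superset]) blast
  then show ?thesis unfolding diag_isotypic_def using lam by (intro subsetD[OF span_in_superset]) blast
qed

lemma diag_isotypic_subset_ker:
  assumes TA: "TA \<in> carrier_mat m m" and TB: "TB \<in> carrier_mat n n"
    and eA: "\<And>lam v. lam \<in> irreps G \<Longrightarrow> v \<in> isotypic G m \<rho>A lam \<Longrightarrow> TA *\<^sub>v v = a lam \<cdot>\<^sub>v v"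
    and eB: "\<And>lam v. lam \<in> irreps G \<Longrightarrow> v \<in> isotypic G n \<rho>B lam \<Longrightarrow> TB *\<^sub>v v = a lam \<cdot>\<^sub>v v"
  shows "diag_isotypic G m \<rho>A n \<rho>B \<subseteq> ker_mat (m * n) (kron TA (1\<^sub>m n) - kron (1\<^sub>m m) TB)"
proof -
  let ?K = "kron TA (1\<^sub>m n) - kron (1\<^sub>m m) TB"
  have ker: "is_subspace (m*n) (ker_mat (m*n) ?K)" using is_subspace_ker_mat[OF kron_diff_carrier[OF TB]] .
  have "tensor_sub m n (isotypic G m \<rho>A lam) (isotypic G n \<rho>B lam) \<subseteq> ker_mat (m * n) ?K"
    if lam: "lam \<in> irreps G" for lam
    unfolding tensor_sub_def
  proof (rule span_in_least[OF ker], rule subsetI)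
    fix x assume "x \<in> {kron_vec u v |u v. u \<in> isotypic G m \<rho>A lam \<and> v \<in> isotypic G n \<rho>B lam}"
    then obtain u v where x: "x = kron_vec u v"
      and u: "u \<in> isotypic G m \<rho>A lam" and v: "v \<in> isotypic G n \<rho>B lam" by blast
    have uc: "u \<in> carrier_vec m" and vc: "v \<in> carrier_vec n" using u v isotypic_carrier by blast+
    have "?K *\<^sub>v x = (a lam - a lam) \<cdot>\<^sub>v x"
      unfolding x by (rule kron_diff_mult_kron_vec[OF TA TB uc vc eA[OF lam u] eB[OF lam v]])
    then show "x \<in> ker_mat (m * n) ?K" unfolding ker_mat_def x using uc vc by simp
  qed
  then show ?thesis unfolding diag_isotypic_def by (intro span_in_least[OF ker]) blast
qed

lemma ker_subset_diag_isotypic: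
  assumes G: "group G" and rA: "unitary_rep G m \<rho>A" and rB: "unitary_rep G n \<rho>B"
    and TA: "TA \<in> carrier_mat m m" and TB: "TB \<in> carrier_mat n n"
    and eA: "\<And>lam v. lam \<in> irreps G \<Longrightarrow> v \<in> isotypic G m \<rho>A lam \<Longrightarrow> TA *\<^sub>v v = \<alpha> lam \<cdot>\<^sub>v v"
    and eB: "\<And>lam v. lam \<in> irreps G \<Longrightarrow> v \<in> isotypic G n \<rho>B lam \<Longrightarrow> TB *\<^sub>v v = \<alpha> lam \<cdot>\<^sub>v v"
    and inj: "\<forall>lam\<in>irreps G. \<forall>mu\<in>irreps G. \<alpha> lam = \<alpha> mu \<longrightarrow> equiv_rep G lam mu"
  shows "ker_mat (m * n) (kron TA (1\<^sub>m n) - kron (1\<^sub>m m) TB) \<subseteq> diag_isotypic G m \<rho>A n \<rho>B"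
proof -
  let ?K = "kron TA (1\<^sub>m n) - kron (1\<^sub>m m) TB"
  define UA where "UA = (\<Union>lam\<in>irreps G. isotypic G m \<rho>A lam)"
  define UB where "UB = (\<Union>lam\<in>irreps G. isotypic G n \<rho>B lam)"
  define S where "S = {kron_vec u v | u v. u \<in> UA \<and> v \<in> UB}"
  have UAc: "UA \<subseteq> carrier_vec m" and UBc: "UB \<subseteq> carrier_vec n"
    unfolding UA_def UB_def using isotypic_carrier by blast+
  have Sc: "S \<subseteq> carrier_vec (m*n)" unfolding S_def using UAc UBc by (blast intro: kron_vec_carrier)
  have "{kron_vec u v | u v. u \<in> carrier_vec m \<and> v \<in> carrier_vec n} \<subseteq> span_in (m*n) S"
    using kron_vec_in_span[OF UAc UBc] carrier_vec_subset_span_isotypic[OF G rA]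
      carrier_vec_subset_span_isotypic[OF G rB]
    unfolding S_def UA_def UB_def by blast
  then have spans: "carrier_vec (m*n) \<subseteq> span_in (m*n) S"
    using in_span_kron_vecs span_in_mono[OF _ Sc] by blast
  have "\<exists>e. ?K *\<^sub>v s = e \<cdot>\<^sub>v s \<and> (e = 0 \<longrightarrow> s \<in> diag_isotypic G m \<rho>A n \<rho>B)" if "s \<in> S" for s
  proof -
    obtain u v lam mu where s: "s = kron_vec u v" and lam: "lam \<in> irreps G" and mu: "mu \<in> irreps G"
      and u: "u \<in> isotypic G m \<rho>A lam" and v: "v \<in> isotypic G n \<rho>B mu"
      using \<open>s \<in> S\<close> unfolding S_def UA_def UB_def by blast
    have uc: "u \<in> carrier_vec m" and vc: "v \<in> carrier_vec n" using u v isotypic_carrier by blast+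
    have "?K *\<^sub>v s = (\<alpha> lam - \<alpha> mu) \<cdot>\<^sub>v s"
      unfolding s by (rule kron_diff_mult_kron_vec[OF TA TB uc vc eA[OF lam u] eB[OF mu v]])
    moreover have "s \<in> diag_isotypic G m \<rho>A n \<rho>B" if "\<alpha> lam - \<alpha> mu = 0"
    proof -
      have "equiv_rep G lam mu" using inj lam mu that by simp
      then have "v \<in> isotypic G n \<rho>B lam" using isotypic_subset_if_equiv_rep[OF rB lam mu] v by blast
      then show ?thesis unfolding s using kron_vec_in_diag_isotypic[OF lam u] by blast
    qed
    ultimately show ?thesis by blast
  qed
  then show ?thesis
    using ker_mat_subset_if_eigenvectors_span[OF kron_diff_carrier[OF TB] is_subspace_diag_isotypic Sc spans]
    by blast
qed

lemma ker_eq_diag_isotypic: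
  assumes G: "group G" and rA: "unitary_rep G m \<rho>A" and rB: "unitary_rep G n \<rho>B"
    and TA: "TA \<in> carrier_mat m m" and TB: "TB \<in> carrier_mat n n"
    and eA: "\<And>lam v. lam \<in> irreps G \<Longrightarrow> v \<in> isotypic G m \<rho>A lam \<Longrightarrow> TA *\<^sub>v v = \<alpha> lam \<cdot>\<^sub>v v"
    and eB: "\<And>lam v. lam \<in> irreps G \<Longrightarrow> v \<in> isotypic G n \<rho>B lam \<Longrightarrow> TB *\<^sub>v v = \<alpha> lam \<cdot>\<^sub>v v"
    and inj: "\<forall>lam\<in>irreps G. \<forall>mu\<in>irreps G. \<alpha> lam = \<alpha> mu \<longrightarrow> equiv_rep G lam mu"
  shows "ker_mat (m * n) (kron TA (1\<^sub>m n) - kron (1\<^sub>m m) TB) = diag_isotypic G m \<rho>A n \<rho>B"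
  using ker_subset_diag_isotypic[where \<alpha> = \<alpha>, OF G rA rB TA TB eA eB inj]
    diag_isotypic_subset_ker[where a = \<alpha>, OF TA TB eA eB] by blast

theorem theorem5:
  fixes G :: "('g, 'b) monoid_scheme"
    and m n :: nat and \<rho>A \<rho>B :: "'g \<Rightarrow> complex mat" and TA TB :: "complex mat"
  assumes "group G" and "finite (carrier G)"
    and "unitary_rep G m \<rho>A" and "unitary_rep G n \<rho>B"
    and "TA \<in> End_G G m \<rho>A" and "TB \<in> End_G G n \<rho>B"
    and "self_adjoint TA" and "self_adjoint TB"
  defines "K \<equiv> kron TA (1\<^sub>m n) - kron (1\<^sub>m m) TB"
  shows "(\<forall>g\<in>carrier G. K * kron (\<rho>A g) (\<rho>B g) = kron (\<rho>A g) (\<rho>B g) * K)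
     \<and> (\<forall>a :: nat \<times> ('g \<Rightarrow> complex mat) \<Rightarrow> complex.
          (\<forall>lam\<in>irreps G. (\<forall>v\<in>isotypic G m \<rho>A lam. TA *\<^sub>v v = a lam \<cdot>\<^sub>v v) \<and>
                         (\<forall>v\<in>isotypic G n \<rho>B lam. TB *\<^sub>v v = a lam \<cdot>\<^sub>v v))
          \<longrightarrow> diag_isotypic G m \<rho>A n \<rho>B \<subseteq> ker_mat (m * n) K)
     \<and> (\<forall>z \<alpha>. z \<in> group_alg_center G \<and> TA = rep_alg G m \<rho>A z \<and> TB = rep_alg G n \<rho>B z
          \<and> (\<forall>lam\<in>irreps G. rep_alg G (fst lam) (snd lam) z = \<alpha> lam \<cdot>\<^sub>m 1\<^sub>m (fst lam))
          \<and> (\<forall>lam\<in>irreps G. \<forall>mu\<in>irreps G. \<alpha> lam = \<alpha> mu \<longrightarrow> equiv_rep G lam mu)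
          \<longrightarrow> ker_mat (m * n) K = diag_isotypic G m \<rho>A n \<rho>B)"
proof -
  have TA: "TA \<in> carrier_mat m m" and cA: "\<forall>g\<in>carrier G. TA * \<rho>A g = \<rho>A g * TA"
    using assms(5) unfolding End_G_def by auto
  have TB: "TB \<in> carrier_mat n n" and cB: "\<forall>g\<in>carrier G. TB * \<rho>B g = \<rho>B g * TB"
    using assms(6) unfolding End_G_def by auto
  have commute: "\<forall>g\<in>carrier G. K * kron (\<rho>A g) (\<rho>B g) = kron (\<rho>A g) (\<rho>B g) * K"
    unfolding K_def using cA cB
      kron_diff_commute[OF TA TB unitary_rep_carrier[OF assms(3)] unitary_rep_carrier[OF assms(4)]]
    by auto
  have ker_eq: "ker_mat (m * n) K = diag_isotypic G m \<rho>A n \<rho>B"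
    if TA_z: "TA = rep_alg G m \<rho>A z" and TB_z: "TB = rep_alg G n \<rho>B z"
      and scalar: "\<forall>lam\<in>irreps G. rep_alg G (fst lam) (snd lam) z = \<alpha> lam \<cdot>\<^sub>m 1\<^sub>m (fst lam)"
      and "\<forall>lam\<in>irreps G. \<forall>mu\<in>irreps G. \<alpha> lam = \<alpha> mu \<longrightarrow> equiv_rep G lam mu" for z \<alpha>
  proof -
    have "TA *\<^sub>v v = \<alpha> lam \<cdot>\<^sub>v v" if "lam \<in> irreps G" "v \<in> isotypic G m \<rho>A lam" for lam v
      using rep_alg_on_isotypic[OF assms(3)] scalar that TA_z by blast
    moreover have "TB *\<^sub>v v = \<alpha> lam \<cdot>\<^sub>v v" if "lam \<in> irreps G" "v \<in> isotypic G n \<rho>B lam" for lam v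
      using rep_alg_on_isotypic[OF assms(4)] scalar that TB_z by blast
    ultimately show ?thesis unfolding K_def using ker_eq_diag_isotypic[OF assms(1,3,4) TA TB] that by blast
  qed
  show ?thesis
    using commute diag_isotypic_subset_ker[OF TA TB] ker_eq unfolding K_def by blast
qed

end
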